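(* Let $R$ be a ring and $M$ a bounded below complex of finitely presented left $R$-modules. Then every flat complex belongs to $\underline{\mathfrak{Pr}}^{-1}_{\mathscr{C}(R)}(M)$.
   Context: Complexes are homologically indexed; a complex $M$ is bounded below if there is $b$ with $M_n=0$ for all $n\le b$. A flat complex is an exact complex all of whose cycles $Z_n=\mathrm{Ker}\,d_n$ are flat modules (equivalently, a flat object of the category $\mathscr{C}(R)$ of complexes). $\underline{\mathfrak{Pr}}^{-1}_{\mathscr{C}(R)}(M)$ is the class of complexes $N$ such that every morphism of complexes $M\to N$ factors through a projective complex. *)

theory Defs
  imports "HOL-Algebra.Module" "HOL-Algebra.FiniteProduct"
begin

text \<open>HOL-Algebra's locale module requires a commutative ring, so we use its
record type and its axioms predicate module_axioms, but only require ring R.\<close>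

definition left_module :: "'r ring \<Rightarrow> ('r, 'm) module \<Rightarrow> bool" where
  "left_module R M \<longleftrightarrow> ring R \<and> abelian_group M \<and> module_axioms R M"

definition lin_hom :: "'r ring \<Rightarrow> ('r, 'm) module \<Rightarrow> ('r, 'n) module \<Rightarrow> ('m \<Rightarrow> 'n) set" where
  "lin_hom R M N = {h. (\<forall>x\<in>carrier M. h x \<in> carrier N)
      \<and> (\<forall>x\<in>carrier M. \<forall>y\<in>carrier M. h (x \<oplus>\<^bsub>M\<^esub> y) = h x \<oplus>\<^bsub>N\<^esub> h y)
      \<and> (\<forall>a\<in>carrier R. \<forall>x\<in>carrier M. h (a \<odot>\<^bsub>M\<^esub> x) = a \<odot>\<^bsub>N\<^esub> h x)}"

text \<open>M is finitely presented: there are generators x_0..x_{n-1} (so R^n \<rightarrow> M is onto)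
and finitely many relations r_0..r_{k-1} in R^n generating the kernel of R^n \<rightarrow> M,
i.e. an exact sequence R^k \<rightarrow> R^n \<rightarrow> M \<rightarrow> 0. Elements of R^n are lists of length n.\<close>

definition lincomb :: "('r, 'm) module \<Rightarrow> 'r list \<Rightarrow> 'm list \<Rightarrow> 'm" where
  "lincomb M rs xs = finsum M (\<lambda>i. rs ! i \<odot>\<^bsub>M\<^esub> xs ! i) {..<length xs}"

definition tuples :: "'r ring \<Rightarrow> nat \<Rightarrow> 'r list set" where
  "tuples R n = {rs. length rs = n \<and> set rs \<subseteq> carrier R}"

definition fin_presented :: "'r ring \<Rightarrow> ('r, 'm) module \<Rightarrow> bool" where
  "fin_presented R M \<longleftrightarrow>
    (\<exists>xs :: 'm list. set xs \<subseteq> carrier M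
      \<and> (\<forall>x\<in>carrier M. \<exists>rs\<in>tuples R (length xs). x = lincomb M rs xs)
      \<and> (\<exists>rels :: 'r list list. set rels \<subseteq> tuples R (length xs)
          \<and> (\<forall>rs\<in>tuples R (length xs).
               lincomb M rs xs = \<zero>\<^bsub>M\<^esub> \<longleftrightarrow>
               (\<exists>cs\<in>tuples R (length rels).
                  \<forall>i<length xs. rs ! i = finsum R (\<lambda>j. cs ! j \<otimes>\<^bsub>R\<^esub> (rels ! j ! i)) {..<length rels}))))"

definition right_ideal :: "'r ring \<Rightarrow> 'r set \<Rightarrow> bool" where
  "right_ideal R I \<longleftrightarrow> subgroup I (add_monoid R)
     \<and> (\<forall>a\<in>I. \<forall>r\<in>carrier R. a \<otimes>\<^bsub>R\<^esub> r \<in> I)"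

definition delta :: "'c \<Rightarrow> 'c \<Rightarrow> int" where
  "delta p = (\<lambda>q. if q = p then 1 else 0)"

text \<open>For S a right ideal of R (or S = R), the tensor product S \<otimes>_R F is the free abelian
group on S \<times> F (finitely supported functions S \<times> F \<Rightarrow> int) modulo the subgroup
generated by the balanced-bilinearity relations. tensor_rel R F S is that subgroup;
a formal sum represents 0 in S \<otimes>_R F iff it lies in tensor_rel R F S.\<close>

inductive_set tensor_rel :: "'r ring \<Rightarrow> ('r, 'm) module \<Rightarrow> 'r set \<Rightarrow> ('r \<times> 'm \<Rightarrow> int) set"
  for R F S where
  zero: "(\<lambda>_. 0) \<in> tensor_rel R F S"
| diff: "u \<in> tensor_rel R F S \<Longrightarrow> v \<in> tensor_rel R F S \<Longrightarrow> (\<lambda>p. u p - v p) \<in> tensor_rel R F S"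
| rel_l: "a \<in> S \<Longrightarrow> a' \<in> S \<Longrightarrow> x \<in> carrier F \<Longrightarrow>
     (\<lambda>p. delta (a \<oplus>\<^bsub>R\<^esub> a', x) p - delta (a, x) p - delta (a', x) p) \<in> tensor_rel R F S"
| rel_r: "a \<in> S \<Longrightarrow> x \<in> carrier F \<Longrightarrow> x' \<in> carrier F \<Longrightarrow>
     (\<lambda>p. delta (a, x \<oplus>\<^bsub>F\<^esub> x') p - delta (a, x) p - delta (a, x') p) \<in> tensor_rel R F S"
| rel_bal: "a \<in> S \<Longrightarrow> r \<in> carrier R \<Longrightarrow> x \<in> carrier F \<Longrightarrow>
     (\<lambda>p. delta (a \<otimes>\<^bsub>R\<^esub> r, x) p - delta (a, r \<odot>\<^bsub>F\<^esub> x) p) \<in> tensor_rel R F S"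

text \<open>A left module F is flat iff for every right ideal I the induced map
I \<otimes>_R F \<rightarrow> R \<otimes>_R F is injective (ideal criterion for flatness).\<close>

definition flat_module :: "'r ring \<Rightarrow> ('r, 'm) module \<Rightarrow> bool" where
  "flat_module R F \<longleftrightarrow> left_module R F \<and>
    (\<forall>I. right_ideal R I \<longrightarrow>
       (\<forall>u :: 'r \<times> 'm \<Rightarrow> int. finite {p. u p \<noteq> 0} \<and> {p. u p \<noteq> 0} \<subseteq> I \<times> carrier F
          \<longrightarrow> u \<in> tensor_rel R F (carrier R) \<longrightarrow> u \<in> tensor_rel R F I))"

definition is_complex :: "'r ring \<Rightarrow> (int \<Rightarrow> ('r, 'm) module) \<Rightarrow> (int \<Rightarrow> 'm \<Rightarrow> 'm) \<Rightarrow> bool" where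
  "is_complex R C d \<longleftrightarrow> (\<forall>n. left_module R (C n))
     \<and> (\<forall>n. d n \<in> lin_hom R (C n) (C (n - 1)))
     \<and> (\<forall>n. \<forall>x\<in>carrier (C n). d (n - 1) (d n x) = \<zero>\<^bsub>C (n - 2)\<^esub>)"

definition cx_morphism :: "'r ring \<Rightarrow> (int \<Rightarrow> ('r, 'm) module) \<Rightarrow> (int \<Rightarrow> 'm \<Rightarrow> 'm)
     \<Rightarrow> (int \<Rightarrow> ('r, 'n) module) \<Rightarrow> (int \<Rightarrow> 'n \<Rightarrow> 'n) \<Rightarrow> (int \<Rightarrow> 'm \<Rightarrow> 'n) \<Rightarrow> bool" where
  "cx_morphism R C dC D dD f \<longleftrightarrow>
     (\<forall>n. f n \<in> lin_hom R (C n) (D n)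
        \<and> (\<forall>x\<in>carrier (C n). dD n (f n x) = f (n - 1) (dC n x)))"

definition bounded_below :: "(int \<Rightarrow> ('r, 'm) module) \<Rightarrow> bool" where
  "bounded_below C \<longleftrightarrow> (\<exists>b::int. \<forall>n\<le>b. carrier (C n) = {\<zero>\<^bsub>C n\<^esub>})"

definition cycles :: "(int \<Rightarrow> ('r, 'm) module) \<Rightarrow> (int \<Rightarrow> 'm \<Rightarrow> 'm) \<Rightarrow> int \<Rightarrow> ('r, 'm) module" where
  "cycles C d n = (C n)\<lparr>carrier := {x \<in> carrier (C n). d n x = \<zero>\<^bsub>C (n - 1)\<^esub>}\<rparr>"

definition exact_complex :: "'r ring \<Rightarrow> (int \<Rightarrow> ('r, 'm) module) \<Rightarrow> (int \<Rightarrow> 'm \<Rightarrow> 'm) \<Rightarrow> bool" where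
  "exact_complex R C d \<longleftrightarrow> is_complex R C d
     \<and> (\<forall>n. carrier (cycles C d n) = d (n + 1) ` carrier (C (n + 1)))"

definition flat_complex :: "'r ring \<Rightarrow> (int \<Rightarrow> ('r, 'm) module) \<Rightarrow> (int \<Rightarrow> 'm \<Rightarrow> 'm) \<Rightarrow> bool" where
  "flat_complex R C d \<longleftrightarrow> exact_complex R C d \<and> (\<forall>n. flat_module R (cycles C d n))"

text \<open>Since HOL cannot quantify over types inside a
formula, the lifting property is required for target complexes Y of the same element
type as P and source complexes X of element type (bool \<times> 'p) \<Rightarrow> 'r, which is big
enough to contain the canonical free (disc) cover of P; hence this is equivalent to
projectivity in C(R).\<close>

definition projective_complex :: "'r ring \<Rightarrow> (int \<Rightarrow> ('r, 'p) module) \<Rightarrow> (int \<Rightarrow> 'p \<Rightarrow> 'p) \<Rightarrow> bool" where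
  "projective_complex R P dP \<longleftrightarrow> is_complex R P dP \<and>
    (\<forall>(X :: int \<Rightarrow> ('r, bool \<times> 'p \<Rightarrow> 'r) module) dX (Y :: int \<Rightarrow> ('r, 'p) module) dY g h.
       is_complex R X dX \<and> is_complex R Y dY \<and> cx_morphism R X dX Y dY g
       \<and> (\<forall>n. g n ` carrier (X n) = carrier (Y n))
       \<and> cx_morphism R P dP Y dY h
       \<longrightarrow> (\<exists>k. cx_morphism R P dP X dX k \<and> (\<forall>n. \<forall>x\<in>carrier (P n). g n (k n x) = h n x)))"

text \<open>The projective complex is taken with element type (bool \<times> 'n) \<Rightarrow> 'r, which contains
the canonical projective (disc) cover of N; any factorisation through some projective
complex yields one through that cover.\<close>

definition in_Pr_inv :: "'r ring \<Rightarrow> (int \<Rightarrow> ('r, 'm) module) \<Rightarrow> (int \<Rightarrow> 'm \<Rightarrow> 'm)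
     \<Rightarrow> (int \<Rightarrow> ('r, 'n) module) \<Rightarrow> (int \<Rightarrow> 'n \<Rightarrow> 'n) \<Rightarrow> bool" where
  "in_Pr_inv R M dM N dN \<longleftrightarrow> is_complex R N dN \<and>
    (\<forall>f. cx_morphism R M dM N dN f \<longrightarrow>
       (\<exists>(P :: int \<Rightarrow> ('r, bool \<times> 'n \<Rightarrow> 'r) module) dP g h.
          projective_complex R P dP \<and> cx_morphism R M dM P dP g \<and> cx_morphism R P dP N dN h
          \<and> (\<forall>n. \<forall>x\<in>carrier (M n). h n (g n x) = f n x)))"

end

(*
  Let D(N) be the disc complex on N: in degree n it is free on the elements of N n and of
  N (n + 1), and d maps the generator y of the first kind to the generator y of the second kind
  one degree lower. D(N) is projective and maps onto N. A chain map f from M to N factors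
  through D(N) as soon as there are linear maps H n from M n to the free module on N (n + 1)
  with f = d (augm H) + (augm H) d, augm being the augmentation of a free module on a module.

  The H n are built upwards from a lower bound of M. In each degree the defect
  f - (augm H) d takes values in the cycles of N, which are flat. Since M n is finitely
  presented, the defect factors through a finitely generated free module (Lazard), and by
  exactness of N it lifts along d, which produces H n. The Lazard factorisation rests on the
  equational criterion for flatness, derived here from the ideal criterion that defines
  flat modules: a relation sum a i x i = 0 in a flat module F comes from syzygies of the
  a i, because flatness moves the tensor sum a i \<otimes> x i into I \<otimes> F for the right ideal I
  generated by the a i, where coordinates with respect to the a i make sense up to syzygies.
*)

theory Submission
  imports Defs
begin

section \<open>Left modules over a ring\<close>

locale lmod = R?: ring + M?: abelian_group M for M (structure) +
  assumes smult_closed [simp, intro]: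
      "\<lbrakk>a \<in> carrier R; x \<in> carrier M\<rbrakk> \<Longrightarrow> a \<odot>\<^bsub>M\<^esub> x \<in> carrier M"
    and smult_l_distr:
      "\<lbrakk>a \<in> carrier R; b \<in> carrier R; x \<in> carrier M\<rbrakk> \<Longrightarrow>
      (a \<oplus> b) \<odot>\<^bsub>M\<^esub> x = a \<odot>\<^bsub>M\<^esub> x \<oplus>\<^bsub>M\<^esub> b \<odot>\<^bsub>M\<^esub> x"
    and smult_r_distr:
      "\<lbrakk>a \<in> carrier R; x \<in> carrier M; y \<in> carrier M\<rbrakk> \<Longrightarrow>
      a \<odot>\<^bsub>M\<^esub> (x \<oplus>\<^bsub>M\<^esub> y) = a \<odot>\<^bsub>M\<^esub> x \<oplus>\<^bsub>M\<^esub> a \<odot>\<^bsub>M\<^esub> y"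
    and smult_assoc1:
      "\<lbrakk>a \<in> carrier R; b \<in> carrier R; x \<in> carrier M\<rbrakk> \<Longrightarrow>
      (a \<otimes> b) \<odot>\<^bsub>M\<^esub> x = a \<odot>\<^bsub>M\<^esub> (b \<odot>\<^bsub>M\<^esub> x)"
    and smult_one [simp]:
      "x \<in> carrier M \<Longrightarrow> \<one> \<odot>\<^bsub>M\<^esub> x = x"

lemma left_module_lmod: "left_module R M \<Longrightarrow> lmod R M"
  unfolding left_module_def module_axioms_def
  by (intro lmod.intro lmod_axioms.intro) (auto simp: ring_def abelian_group_def)

lemma lmod_left_module: "lmod R M \<Longrightarrow> left_module R M"
  unfolding left_module_def module_axioms_def lmod_def lmod_axioms_def
  by auto

context lmod begin

lemma smult_zero_l [simp]: "x \<in> carrier M \<Longrightarrow> \<zero> \<odot>\<^bsub>M\<^esub> x = \<zero>\<^bsub>M\<^esub>"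
proof -
  assume x: "x \<in> carrier M"
  have "\<zero> \<odot>\<^bsub>M\<^esub> x \<oplus>\<^bsub>M\<^esub> \<zero> \<odot>\<^bsub>M\<^esub> x = (\<zero> \<oplus> \<zero>) \<odot>\<^bsub>M\<^esub> x"
    using x by (metis R.zero_closed smult_l_distr)
  also have "\<dots> = \<zero> \<odot>\<^bsub>M\<^esub> x" using x by simp
  finally have "\<zero> \<odot>\<^bsub>M\<^esub> x \<oplus>\<^bsub>M\<^esub> \<zero> \<odot>\<^bsub>M\<^esub> x = \<zero> \<odot>\<^bsub>M\<^esub> x" .
  then show ?thesis using x M.add.l_cancel_one[of "\<zero> \<odot>\<^bsub>M\<^esub> x" "\<zero> \<odot>\<^bsub>M\<^esub> x"] by simp
qed

lemma smult_zero_r [simp]: "a \<in> carrier R \<Longrightarrow> a \<odot>\<^bsub>M\<^esub> \<zero>\<^bsub>M\<^esub> = \<zero>\<^bsub>M\<^esub>"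
proof -
  assume a: "a \<in> carrier R"
  have "a \<odot>\<^bsub>M\<^esub> \<zero>\<^bsub>M\<^esub> \<oplus>\<^bsub>M\<^esub> a \<odot>\<^bsub>M\<^esub> \<zero>\<^bsub>M\<^esub> = a \<odot>\<^bsub>M\<^esub> (\<zero>\<^bsub>M\<^esub> \<oplus>\<^bsub>M\<^esub> \<zero>\<^bsub>M\<^esub>)"
    using a by (metis M.zero_closed smult_r_distr)
  also have "\<dots> = a \<odot>\<^bsub>M\<^esub> \<zero>\<^bsub>M\<^esub>" using a by simp
  finally have "a \<odot>\<^bsub>M\<^esub> \<zero>\<^bsub>M\<^esub> \<oplus>\<^bsub>M\<^esub> a \<odot>\<^bsub>M\<^esub> \<zero>\<^bsub>M\<^esub> = a \<odot>\<^bsub>M\<^esub> \<zero>\<^bsub>M\<^esub>" .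
  then show ?thesis using a M.add.l_cancel_one[of "a \<odot>\<^bsub>M\<^esub> \<zero>\<^bsub>M\<^esub>" "a \<odot>\<^bsub>M\<^esub> \<zero>\<^bsub>M\<^esub>"] by simp
qed

lemma smult_minus_l: "\<lbrakk>a \<in> carrier R; x \<in> carrier M\<rbrakk> \<Longrightarrow> (\<ominus> a) \<odot>\<^bsub>M\<^esub> x = \<ominus>\<^bsub>M\<^esub> (a \<odot>\<^bsub>M\<^esub> x)"
proof -
  assume a: "a \<in> carrier R" and x: "x \<in> carrier M"
  have "(\<ominus> a) \<odot>\<^bsub>M\<^esub> x \<oplus>\<^bsub>M\<^esub> a \<odot>\<^bsub>M\<^esub> x = \<zero>\<^bsub>M\<^esub>"
    using a x by (simp add: smult_l_distr[symmetric] R.l_neg)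
  then show ?thesis using a x by (simp add: M.minus_equality)
qed

lemma smult_minus_r: "\<lbrakk>a \<in> carrier R; x \<in> carrier M\<rbrakk> \<Longrightarrow> a \<odot>\<^bsub>M\<^esub> (\<ominus>\<^bsub>M\<^esub> x) = \<ominus>\<^bsub>M\<^esub> (a \<odot>\<^bsub>M\<^esub> x)"
proof -
  assume a: "a \<in> carrier R" and x: "x \<in> carrier M"
  have "a \<odot>\<^bsub>M\<^esub> (\<ominus>\<^bsub>M\<^esub> x) \<oplus>\<^bsub>M\<^esub> a \<odot>\<^bsub>M\<^esub> x = \<zero>\<^bsub>M\<^esub>"
    using a x by (simp add: smult_r_distr[symmetric] M.l_neg)
  then show ?thesis using a x by (simp add: M.minus_equality)
qed

lemma smult_diff_l: "\<lbrakk>a \<in> carrier R; b \<in> carrier R; x \<in> carrier M\<rbrakk> \<Longrightarrow>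
   (a \<ominus> b) \<odot>\<^bsub>M\<^esub> x = a \<odot>\<^bsub>M\<^esub> x \<ominus>\<^bsub>M\<^esub> b \<odot>\<^bsub>M\<^esub> x"
  by (simp add: R.minus_eq M.minus_eq smult_l_distr smult_minus_l)

lemma smult_diff_r: "\<lbrakk>a \<in> carrier R; x \<in> carrier M; y \<in> carrier M\<rbrakk> \<Longrightarrow>
   a \<odot>\<^bsub>M\<^esub> (x \<ominus>\<^bsub>M\<^esub> y) = a \<odot>\<^bsub>M\<^esub> x \<ominus>\<^bsub>M\<^esub> a \<odot>\<^bsub>M\<^esub> y"
  by (simp add: M.minus_eq smult_r_distr smult_minus_r)

lemma smult_finsum_r:
  assumes a: "a \<in> carrier R" and f: "f \<in> A \<rightarrow> carrier M"
  shows "a \<odot>\<^bsub>M\<^esub> finsum M f A = finsum M (\<lambda>i. a \<odot>\<^bsub>M\<^esub> f i) A"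
  using f
proof (induct A rule: infinite_finite_induct)
  case (insert i A)
  then show ?case using a by (simp add: smult_r_distr Pi_def)
qed (use a in auto)

end

lemma (in abelian_group) finsum_neg:
  assumes "f \<in> A \<rightarrow> carrier G"
  shows "finsum G (\<lambda>i. \<ominus> f i) A = \<ominus> finsum G f A"
  using assms
proof (induct A rule: infinite_finite_induct)
  case (insert i A)
  then have fi: "f i \<in> carrier G" and fA: "f \<in> A \<rightarrow> carrier G" by auto
  have "finsum G (\<lambda>i. \<ominus> f i) (insert i A) = \<ominus> f i \<oplus> finsum G (\<lambda>i. \<ominus> f i) A"
    using insert fi fA by (intro finsum_insert) auto
  also have "\<dots> = \<ominus> f i \<oplus> \<ominus> finsum G f A" using insert fA by simp
  also have "\<dots> = \<ominus> (f i \<oplus> finsum G f A)" using fi fA by (simp add: minus_add)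
  also have "\<dots> = \<ominus> finsum G f (insert i A)" using insert fi fA by simp
  finally show ?case .
next
  case (infinite A)
  then show ?case by (simp add: minus_equality[of \<zero> \<zero>])
next
  case empty
  then show ?case by (simp add: minus_equality[of \<zero> \<zero>])
qed

lemma lin_homD:
  assumes "h \<in> lin_hom R M N"
  shows "\<And>x. x \<in> carrier M \<Longrightarrow> h x \<in> carrier N"
    and "\<And>x y. x \<in> carrier M \<Longrightarrow> y \<in> carrier M \<Longrightarrow> h (x \<oplus>\<^bsub>M\<^esub> y) = h x \<oplus>\<^bsub>N\<^esub> h y"
    and "\<And>a x. a \<in> carrier R \<Longrightarrow> x \<in> carrier M \<Longrightarrow> h (a \<odot>\<^bsub>M\<^esub> x) = a \<odot>\<^bsub>N\<^esub> h x"
  using assms unfolding lin_hom_def by auto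

lemma lin_homI:
  assumes "\<And>x. x \<in> carrier M \<Longrightarrow> h x \<in> carrier N"
    and "\<And>x y. x \<in> carrier M \<Longrightarrow> y \<in> carrier M \<Longrightarrow> h (x \<oplus>\<^bsub>M\<^esub> y) = h x \<oplus>\<^bsub>N\<^esub> h y"
    and "\<And>a x. a \<in> carrier R \<Longrightarrow> x \<in> carrier M \<Longrightarrow> h (a \<odot>\<^bsub>M\<^esub> x) = a \<odot>\<^bsub>N\<^esub> h x"
  shows "h \<in> lin_hom R M N"
  using assms unfolding lin_hom_def by auto

lemma lin_hom_zero:
  assumes M: "lmod R M" and N: "lmod R N" and h: "h \<in> lin_hom R M N"
  shows "h \<zero>\<^bsub>M\<^esub> = \<zero>\<^bsub>N\<^esub>"
proof -
  interpret M: lmod R M by fact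
  interpret N: lmod R N by fact
  have "h \<zero>\<^bsub>M\<^esub> \<oplus>\<^bsub>N\<^esub> h \<zero>\<^bsub>M\<^esub> = h \<zero>\<^bsub>M\<^esub>"
    using lin_homD[OF h] by (metis M.l_zero M.zero_closed)
  then show ?thesis using lin_homD(1)[OF h] M.zero_closed
    by (simp add: N.add.l_cancel_one)
qed

lemma lin_hom_minus:
  assumes M: "lmod R M" and N: "lmod R N" and h: "h \<in> lin_hom R M N" and x: "x \<in> carrier M"
  shows "h (\<ominus>\<^bsub>M\<^esub> x) = \<ominus>\<^bsub>N\<^esub> h x"
proof -
  interpret M: lmod R M by fact
  interpret N: lmod R N by fact
  have "h (\<ominus>\<^bsub>M\<^esub> x) \<oplus>\<^bsub>N\<^esub> h x = \<zero>\<^bsub>N\<^esub>"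
    using lin_homD(2)[OF h, of "\<ominus>\<^bsub>M\<^esub> x" x] x lin_hom_zero[OF M N h] by (simp add: M.l_neg)
  then show ?thesis using x lin_homD(1)[OF h] by (simp add: N.minus_equality)
qed

lemma lin_hom_diff:
  assumes M: "lmod R M" and N: "lmod R N" and h: "h \<in> lin_hom R M N"
    and x: "x \<in> carrier M" and y: "y \<in> carrier M"
  shows "h (x \<ominus>\<^bsub>M\<^esub> y) = h x \<ominus>\<^bsub>N\<^esub> h y"
proof -
  interpret M: lmod R M by fact
  interpret N: lmod R N by fact
  show ?thesis using x y lin_homD[OF h] lin_hom_minus[OF M N h]
    by (simp add: M.minus_eq N.minus_eq)
qed

lemma lin_hom_finsum:
  assumes M: "lmod R M" and N: "lmod R N" and h: "h \<in> lin_hom R M N"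
    and f: "f \<in> A \<rightarrow> carrier M"
  shows "h (finsum M f A) = finsum N (\<lambda>i. h (f i)) A"
proof -
  interpret M: lmod R M by fact
  interpret N: lmod R N by fact
  show ?thesis using f
  proof (induct A rule: infinite_finite_induct)
    case (infinite A)
    then show ?case using lin_hom_zero[OF M N h] by simp
  next
    case empty
    then show ?case using lin_hom_zero[OF M N h] by simp
  next
    case (insert i A)
    then have "f i \<in> carrier M" "f \<in> A \<rightarrow> carrier M" by auto
    then show ?case using insert lin_homD[OF h] by (auto simp: Pi_def)
  qed
qed

lemma lin_hom_comp:
  assumes "g \<in> lin_hom R M N" "h \<in> lin_hom R N K"
  shows "(\<lambda>x. h (g x)) \<in> lin_hom R M K"
  using assms unfolding lin_hom_def by auto

lemma lin_hom_pointwise_add: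
  assumes N: "lmod R N" and g: "g \<in> lin_hom R M N" and h: "h \<in> lin_hom R M N"
  shows "(\<lambda>x. g x \<oplus>\<^bsub>N\<^esub> h x) \<in> lin_hom R M N"
proof -
  interpret N: lmod R N by fact
  show ?thesis
  proof (rule lin_homI)
    fix x y assume "x \<in> carrier M" "y \<in> carrier M"
    then show "g (x \<oplus>\<^bsub>M\<^esub> y) \<oplus>\<^bsub>N\<^esub> h (x \<oplus>\<^bsub>M\<^esub> y) = g x \<oplus>\<^bsub>N\<^esub> h x \<oplus>\<^bsub>N\<^esub> (g y \<oplus>\<^bsub>N\<^esub> h y)"
      using lin_homD[OF g] lin_homD[OF h] by (simp add: N.a_ac)
  next
    fix a x assume "a \<in> carrier R" "x \<in> carrier M"
    then show "g (a \<odot>\<^bsub>M\<^esub> x) \<oplus>\<^bsub>N\<^esub> h (a \<odot>\<^bsub>M\<^esub> x) = a \<odot>\<^bsub>N\<^esub> (g x \<oplus>\<^bsub>N\<^esub> h x)"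
      using lin_homD[OF g] lin_homD[OF h] by (simp add: N.smult_r_distr)
  qed (use lin_homD[OF g] lin_homD[OF h] in auto)
qed

lemma lin_hom_pointwise_diff:
  assumes N: "lmod R N" and g: "g \<in> lin_hom R M N" and h: "h \<in> lin_hom R M N"
  shows "(\<lambda>x. g x \<ominus>\<^bsub>N\<^esub> h x) \<in> lin_hom R M N"
proof -
  interpret N: lmod R N by fact
  show ?thesis
  proof (rule lin_homI)
    fix x y assume "x \<in> carrier M" "y \<in> carrier M"
    then show "g (x \<oplus>\<^bsub>M\<^esub> y) \<ominus>\<^bsub>N\<^esub> h (x \<oplus>\<^bsub>M\<^esub> y) = (g x \<ominus>\<^bsub>N\<^esub> h x) \<oplus>\<^bsub>N\<^esub> (g y \<ominus>\<^bsub>N\<^esub> h y)"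
      using lin_homD[OF g] lin_homD[OF h] by (simp add: N.minus_eq N.minus_add N.a_ac)
  next
    fix a x assume "a \<in> carrier R" "x \<in> carrier M"
    then show "g (a \<odot>\<^bsub>M\<^esub> x) \<ominus>\<^bsub>N\<^esub> h (a \<odot>\<^bsub>M\<^esub> x) = a \<odot>\<^bsub>N\<^esub> (g x \<ominus>\<^bsub>N\<^esub> h x)"
      using lin_homD[OF g] lin_homD[OF h] by (simp add: N.smult_diff_r)
  qed (use lin_homD[OF g] lin_homD[OF h] in auto)
qed


section \<open>Free modules\<close>

text \<open>Finitely supported coefficient functions on S; the fields mult and one of the module
  record are junk.\<close>

definition free_mod :: "'r ring \<Rightarrow> 'a set \<Rightarrow> ('r, 'a \<Rightarrow> 'r) module" where
  "free_mod R S = \<lparr>carrier = {w. (\<forall>a. w a \<in> carrier R) \<and> (\<forall>a. a \<notin> S \<longrightarrow> w a = \<zero>\<^bsub>R\<^esub>)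
                   \<and> finite {a. w a \<noteq> \<zero>\<^bsub>R\<^esub>}},
     mult = (\<lambda>v w. v), one = (\<lambda>_. \<zero>\<^bsub>R\<^esub>), zero = (\<lambda>_. \<zero>\<^bsub>R\<^esub>),
     add = (\<lambda>v w a. v a \<oplus>\<^bsub>R\<^esub> w a), smult = (\<lambda>r w a. r \<otimes>\<^bsub>R\<^esub> w a)\<rparr>"

lemma free_mod_simps:
  "carrier (free_mod R S) = {w. (\<forall>a. w a \<in> carrier R) \<and> (\<forall>a. a \<notin> S \<longrightarrow> w a = \<zero>\<^bsub>R\<^esub>)
                   \<and> finite {a. w a \<noteq> \<zero>\<^bsub>R\<^esub>}}"
  "zero (free_mod R S) = (\<lambda>_. \<zero>\<^bsub>R\<^esub>)"
  "add (free_mod R S) = (\<lambda>v w a. v a \<oplus>\<^bsub>R\<^esub> w a)"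
  "smult (free_mod R S) = (\<lambda>r w a. r \<otimes>\<^bsub>R\<^esub> w a)"
  by (simp_all add: free_mod_def)

lemma free_mod_carrierI:
  "(\<And>a. w a \<in> carrier R) \<Longrightarrow> (\<And>a. a \<notin> S \<Longrightarrow> w a = \<zero>\<^bsub>R\<^esub>) \<Longrightarrow> finite {a. w a \<noteq> \<zero>\<^bsub>R\<^esub>}
   \<Longrightarrow> w \<in> carrier (free_mod R S)"
  by (simp add: free_mod_simps)

lemma free_mod_carrierD:
  assumes "w \<in> carrier (free_mod R S)"
  shows "w a \<in> carrier R" "a \<notin> S \<Longrightarrow> w a = \<zero>\<^bsub>R\<^esub>" "finite {a. w a \<noteq> \<zero>\<^bsub>R\<^esub>}"
    "{a. w a \<noteq> \<zero>\<^bsub>R\<^esub>} \<subseteq> S"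
  using assms by (auto simp: free_mod_simps)

lemma abelian_group_free_mod:
  assumes "ring R"
  shows "abelian_group (free_mod R S)"
proof -
  interpret ring R by fact
  have neg: "(\<lambda>a. \<ominus>\<^bsub>R\<^esub> w a) \<in> carrier (free_mod R S)" if w: "w \<in> carrier (free_mod R S)" for w
  proof -
    have "{a. \<ominus>\<^bsub>R\<^esub> w a \<noteq> \<zero>\<^bsub>R\<^esub>} \<subseteq> {a. w a \<noteq> \<zero>\<^bsub>R\<^esub>}" using w by (auto simp: free_mod_simps)
    then show ?thesis using w by (auto simp: free_mod_simps intro: finite_subset)
  qed
  show ?thesis
  proof (rule abelian_groupI)
    fix v w assume "v \<in> carrier (free_mod R S)" "w \<in> carrier (free_mod R S)"
    then show "v \<oplus>\<^bsub>free_mod R S\<^esub> w \<in> carrier (free_mod R S)"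
      by (auto simp: free_mod_simps
          intro: finite_subset[of _ "{a. v a \<noteq> \<zero>\<^bsub>R\<^esub>} \<union> {a. w a \<noteq> \<zero>\<^bsub>R\<^esub>}"])
  next
    fix w assume w: "w \<in> carrier (free_mod R S)"
    then show "\<exists>v\<in>carrier (free_mod R S). v \<oplus>\<^bsub>free_mod R S\<^esub> w = \<zero>\<^bsub>free_mod R S\<^esub>"
      using neg[OF w] by (intro bexI[of _ "\<lambda>a. \<ominus>\<^bsub>R\<^esub> w a"]) (auto simp: free_mod_simps l_neg)
  qed (auto simp: free_mod_simps a_ac)
qed

lemma lmod_free_mod:
  fixes R (structure)
  assumes "ring R"
  shows "lmod R (free_mod R S)"
proof -
  interpret ring R by fact
  show ?thesis
  proof (intro lmod.intro lmod_axioms.intro abelian_group_free_mod)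
    fix a w assume a: "a \<in> carrier R" and w: "w \<in> carrier (free_mod R S)"
    have "{b. a \<otimes>\<^bsub>R\<^esub> w b \<noteq> \<zero>\<^bsub>R\<^esub>} \<subseteq> {b. w b \<noteq> \<zero>\<^bsub>R\<^esub>}" using a w by (auto simp: free_mod_simps)
    then show "a \<odot>\<^bsub>free_mod R S\<^esub> w \<in> carrier (free_mod R S)"
      using a w by (auto simp: free_mod_simps intro: finite_subset)
  qed (auto simp: free_mod_simps l_distr r_distr m_assoc intro: assms)
qed

lemma zero_free_mod_lin_hom:
  assumes "ring R"
  shows "(\<lambda>x y. \<zero>\<^bsub>R\<^esub>) \<in> lin_hom R M (free_mod R S)"
proof -
  interpret ring R by fact
  show ?thesis by (intro lin_homI free_mod_carrierI) (auto simp: free_mod_simps)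
qed

lemma finsum_free_mod_apply:
  assumes rR: "ring R" and f: "f \<in> A \<rightarrow> carrier (free_mod R S)"
  shows "finsum (free_mod R S) f A a = finsum R (\<lambda>i. f i a) A"
proof -
  interpret R: ring R by fact
  interpret F: lmod R "free_mod R S" by (rule lmod_free_mod[OF rR])
  show ?thesis using f
  proof (induct A rule: infinite_finite_induct)
    case (infinite A)
    then show ?case by (simp add: free_mod_simps)
  next
    case empty
    then show ?case by (simp add: free_mod_simps)
  next
    case (insert i A)
    then have fi: "f i \<in> carrier (free_mod R S)" and fA: "f \<in> A \<rightarrow> carrier (free_mod R S)" by auto
    have fa: "(\<lambda>i. f i a) \<in> A \<rightarrow> carrier R" "f i a \<in> carrier R"
      using fA fi by (auto simp: free_mod_simps)
    show ?case using insert fi fA fa by (simp add: free_mod_simps)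
  qed
qed

definition unit_vec :: "'r ring \<Rightarrow> 'a \<Rightarrow> 'a \<Rightarrow> 'r" where
  "unit_vec R a = (\<lambda>b. if b = a then \<one>\<^bsub>R\<^esub> else \<zero>\<^bsub>R\<^esub>)"

lemma unit_vec_carrier: "ring R \<Longrightarrow> a \<in> S \<Longrightarrow> unit_vec R a \<in> carrier (free_mod R S)"
proof -
  assume "ring R" "a \<in> S"
  then interpret ring R by simp
  show ?thesis
    by (rule free_mod_carrierI) (use \<open>a \<in> S\<close> in \<open>auto simp: unit_vec_def intro: finite_subset[of _ "{a}"]\<close>)
qed

definition supp :: "'r ring \<Rightarrow> ('a \<Rightarrow> 'r) \<Rightarrow> 'a set" where
  "supp R w = {a. w a \<noteq> \<zero>\<^bsub>R\<^esub>}"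

lemma free_mod_decomp:
  assumes rR: "ring R" and w: "w \<in> carrier (free_mod R S)"
  shows "w = finsum (free_mod R S) (\<lambda>a. w a \<odot>\<^bsub>free_mod R S\<^esub> unit_vec R a) (supp R w)"
proof -
  interpret R: ring R by fact
  interpret F: lmod R "free_mod R S" by (rule lmod_free_mod[OF rR])
  have ss: "supp R w \<subseteq> S" "finite (supp R w)" using free_mod_carrierD[OF w] by (auto simp: supp_def)
  have f: "(\<lambda>a. w a \<odot>\<^bsub>free_mod R S\<^esub> unit_vec R a) \<in> supp R w \<rightarrow> carrier (free_mod R S)"
    using ss free_mod_carrierD(1)[OF w] by (auto intro!: F.smult_closed unit_vec_carrier[OF rR])
  show ?thesis
  proof
    fix b
    have "finsum (free_mod R S) (\<lambda>a. w a \<odot>\<^bsub>free_mod R S\<^esub> unit_vec R a) (supp R w) b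
        = finsum R (\<lambda>a. (w a \<odot>\<^bsub>free_mod R S\<^esub> unit_vec R a) b) (supp R w)"
      by (rule finsum_free_mod_apply[OF rR f])
    also have "\<dots> = finsum R (\<lambda>a. if b = a then w a else \<zero>\<^bsub>R\<^esub>) (supp R w)"
      using free_mod_carrierD(1)[OF w]
      by (intro R.finsum_cong') (auto simp: free_mod_simps unit_vec_def)
    also have "\<dots> = w b"
    proof (cases "b \<in> supp R w")
      case True
      then show ?thesis using ss free_mod_carrierD(1)[OF w]
        by (subst R.add.finprod_singleton) auto
    next
      case False
      then have "w b = \<zero>\<^bsub>R\<^esub>" by (simp add: supp_def)
      moreover have "finsum R (\<lambda>a. if b = a then w a else \<zero>\<^bsub>R\<^esub>) (supp R w) = \<zero>\<^bsub>R\<^esub>"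
        using False by (intro R.add.finprod_one_eqI) auto
      ultimately show ?thesis by simp
    qed
    finally show "w b = finsum (free_mod R S) (\<lambda>a. w a \<odot>\<^bsub>free_mod R S\<^esub> unit_vec R a) (supp R w) b" by simp
  qed
qed

definition lin_ext :: "'r ring \<Rightarrow> ('r, 'm) module \<Rightarrow> ('a \<Rightarrow> 'm) \<Rightarrow> ('a \<Rightarrow> 'r) \<Rightarrow> 'm" where
  "lin_ext R X L w = finsum X (\<lambda>a. w a \<odot>\<^bsub>X\<^esub> L a) (supp R w)"

lemma lin_ext_eq_finsum:
  assumes X: "lmod R X" and w: "w \<in> carrier (free_mod R S)" and A: "finite A" "supp R w \<subseteq> A"
    and L: "\<And>a. a \<in> A \<Longrightarrow> L a \<in> carrier X"
  shows "lin_ext R X L w = finsum X (\<lambda>a. w a \<odot>\<^bsub>X\<^esub> L a) A"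
proof -
  interpret X: lmod R X by fact
  show ?thesis unfolding lin_ext_def
    using free_mod_carrierD(1)[OF w] L A
    by (intro X.add.finprod_mono_neutral_cong_left) (auto simp: supp_def)
qed

lemma supp_free_mod:
  assumes "w \<in> carrier (free_mod R S)"
  shows "finite (supp R w)" "supp R w \<subseteq> S"
  using free_mod_carrierD[OF assms] by (auto simp: supp_def)

lemma lin_ext_add:
  assumes rR: "ring R" and X: "lmod R X" and L: "\<And>a. a \<in> S \<Longrightarrow> L a \<in> carrier X"
    and v: "v \<in> carrier (free_mod R S)" and w: "w \<in> carrier (free_mod R S)"
  shows "lin_ext R X L (v \<oplus>\<^bsub>free_mod R S\<^esub> w) = lin_ext R X L v \<oplus>\<^bsub>X\<^esub> lin_ext R X L w"
proof -
  interpret X: lmod R X by fact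
  interpret F: lmod R "free_mod R S" by (rule lmod_free_mod[OF rR])
  let ?A = "supp R v \<union> supp R w"
  have A: "finite ?A" "?A \<subseteq> S" using supp_free_mod[OF v] supp_free_mod[OF w] by auto
  have LA: "\<And>a. a \<in> ?A \<Longrightarrow> L a \<in> carrier X" using A L by auto
  have vw: "supp R (v \<oplus>\<^bsub>free_mod R S\<^esub> w) \<subseteq> ?A" using v w by (auto simp: supp_def free_mod_simps)
  have "lin_ext R X L (v \<oplus>\<^bsub>free_mod R S\<^esub> w) = finsum X (\<lambda>a. (v \<oplus>\<^bsub>free_mod R S\<^esub> w) a \<odot>\<^bsub>X\<^esub> L a) ?A"
    using v w by (intro lin_ext_eq_finsum[OF X _ A(1) vw LA]) auto
  also have "\<dots> = finsum X (\<lambda>a. v a \<odot>\<^bsub>X\<^esub> L a \<oplus>\<^bsub>X\<^esub> w a \<odot>\<^bsub>X\<^esub> L a) ?A"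
    using LA free_mod_carrierD(1)[OF v] free_mod_carrierD(1)[OF w]
    by (intro X.finsum_cong') (auto simp: free_mod_simps X.smult_l_distr)
  also have "\<dots> = finsum X (\<lambda>a. v a \<odot>\<^bsub>X\<^esub> L a) ?A \<oplus>\<^bsub>X\<^esub> finsum X (\<lambda>a. w a \<odot>\<^bsub>X\<^esub> L a) ?A"
    using LA free_mod_carrierD(1)[OF v] free_mod_carrierD(1)[OF w] by (intro X.finsum_addf) auto
  also have "\<dots> = lin_ext R X L v \<oplus>\<^bsub>X\<^esub> lin_ext R X L w"
    using lin_ext_eq_finsum[OF X v A(1) _ LA] lin_ext_eq_finsum[OF X w A(1) _ LA] by simp
  finally show ?thesis .
qed

lemma lin_ext_smult:
  assumes rR: "ring R" and X: "lmod R X" and L: "\<And>a. a \<in> S \<Longrightarrow> L a \<in> carrier X"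
    and r: "r \<in> carrier R" and w: "w \<in> carrier (free_mod R S)"
  shows "lin_ext R X L (r \<odot>\<^bsub>free_mod R S\<^esub> w) = r \<odot>\<^bsub>X\<^esub> lin_ext R X L w"
proof -
  interpret X: lmod R X by fact
  interpret F: lmod R "free_mod R S" by (rule lmod_free_mod[OF rR])
  let ?A = "supp R w"
  have A: "finite ?A" "?A \<subseteq> S" using supp_free_mod[OF w] by auto
  have LA: "\<And>a. a \<in> ?A \<Longrightarrow> L a \<in> carrier X" using A L by auto
  have rw: "supp R (r \<odot>\<^bsub>free_mod R S\<^esub> w) \<subseteq> ?A" using r w by (auto simp: supp_def free_mod_simps)
  have "lin_ext R X L (r \<odot>\<^bsub>free_mod R S\<^esub> w) = finsum X (\<lambda>a. (r \<odot>\<^bsub>free_mod R S\<^esub> w) a \<odot>\<^bsub>X\<^esub> L a) ?A"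
    using r w by (intro lin_ext_eq_finsum[OF X _ A(1) rw LA]) auto
  also have "\<dots> = finsum X (\<lambda>a. r \<odot>\<^bsub>X\<^esub> (w a \<odot>\<^bsub>X\<^esub> L a)) ?A"
    using LA free_mod_carrierD(1)[OF w] r
    by (intro X.finsum_cong') (auto simp: free_mod_simps X.smult_assoc1)
  also have "\<dots> = r \<odot>\<^bsub>X\<^esub> lin_ext R X L w"
    unfolding lin_ext_def using LA free_mod_carrierD(1)[OF w] r
    by (intro X.smult_finsum_r[symmetric]) auto
  finally show ?thesis .
qed

lemma lin_ext_lin_hom:
  assumes rR: "ring R" and X: "lmod R X" and L: "\<And>a. a \<in> S \<Longrightarrow> L a \<in> carrier X"
  shows "lin_ext R X L \<in> lin_hom R (free_mod R S) X"
proof (rule lin_homI)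
  interpret X: lmod R X by fact
  fix w assume w: "w \<in> carrier (free_mod R S)"
  show "lin_ext R X L w \<in> carrier X"
    unfolding lin_ext_def using L supp_free_mod(2)[OF w] free_mod_carrierD(1)[OF w]
    by (intro X.finsum_closed) auto
qed (simp_all add: lin_ext_add[OF rR X L] lin_ext_smult[OF rR X L])

lemma lin_ext_unit_vec:
  assumes rR: "ring R" and X: "lmod R X" and a: "a \<in> S" and L: "L a \<in> carrier X"
  shows "lin_ext R X L (unit_vec R a) = L a"
proof -
  interpret X: lmod R X by fact
  have s: "supp R (unit_vec R a) \<subseteq> {a}" by (auto simp: supp_def unit_vec_def)
  have "lin_ext R X L (unit_vec R a) = finsum X (\<lambda>b. unit_vec R a b \<odot>\<^bsub>X\<^esub> L b) {a}"
    by (rule lin_ext_eq_finsum[OF X unit_vec_carrier[OF rR a] _ s]) (use L in auto)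
  also have "\<dots> = L a" using L by (simp add: unit_vec_def)
  finally show ?thesis .
qed

lemma free_mod_lin_hom_eqI:
  assumes rR: "ring R" and X: "lmod R X"
    and phi: "\<phi> \<in> lin_hom R (free_mod R S) X" and psi: "\<psi> \<in> lin_hom R (free_mod R S) X"
    and eq: "\<And>a. a \<in> S \<Longrightarrow> \<phi> (unit_vec R a) = \<psi> (unit_vec R a)"
    and w: "w \<in> carrier (free_mod R S)"
  shows "\<phi> w = \<psi> w"
proof -
  interpret X: lmod R X by fact
  interpret F: lmod R "free_mod R S" by (rule lmod_free_mod[OF rR])
  have F: "lmod R (free_mod R S)" by (rule lmod_free_mod[OF rR])
  have ss: "supp R w \<subseteq> S" using free_mod_carrierD(4)[OF w] by (simp add: supp_def)
  have f: "(\<lambda>a. w a \<odot>\<^bsub>free_mod R S\<^esub> unit_vec R a) \<in> supp R w \<rightarrow> carrier (free_mod R S)"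
    using ss free_mod_carrierD(1)[OF w] by (auto intro!: F.smult_closed unit_vec_carrier[OF rR])
  have "\<phi> w = finsum X (\<lambda>a. \<phi> (w a \<odot>\<^bsub>free_mod R S\<^esub> unit_vec R a)) (supp R w)"
    by (subst free_mod_decomp[OF rR w]) (rule lin_hom_finsum[OF F X phi f])
  also have "\<dots> = finsum X (\<lambda>a. \<psi> (w a \<odot>\<^bsub>free_mod R S\<^esub> unit_vec R a)) (supp R w)"
  proof (rule X.finsum_cong')
    fix a assume a: "a \<in> supp R w"
    then have aS: "a \<in> S" using ss by auto
    have d: "unit_vec R a \<in> carrier (free_mod R S)" by (rule unit_vec_carrier[OF rR aS])
    have wa: "w a \<in> carrier R" by (rule free_mod_carrierD(1)[OF w])
    show "\<phi> (w a \<odot>\<^bsub>free_mod R S\<^esub> unit_vec R a) = \<psi> (w a \<odot>\<^bsub>free_mod R S\<^esub> unit_vec R a)"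
      using lin_homD(3)[OF phi wa d] lin_homD(3)[OF psi wa d] eq[OF aS] by simp
  next
    show "(\<lambda>a. \<psi> (w a \<odot>\<^bsub>free_mod R S\<^esub> unit_vec R a)) \<in> supp R w \<rightarrow> carrier X"
      using f lin_homD(1)[OF psi] by auto
  qed simp
  also have "\<dots> = \<psi> w"
    by (subst (2) free_mod_decomp[OF rR w]) (rule lin_hom_finsum[OF F X psi f, symmetric])
  finally show ?thesis .
qed

lemma free_mod_lin_hom_eq_lin_ext:
  assumes rR: "ring R" and X: "lmod R X"
    and phi: "\<phi> \<in> lin_hom R (free_mod R S) X" and w: "w \<in> carrier (free_mod R S)"
  shows "\<phi> w = lin_ext R X (\<lambda>a. \<phi> (unit_vec R a)) w"
proof -
  have c: "\<And>a. a \<in> S \<Longrightarrow> \<phi> (unit_vec R a) \<in> carrier X"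
    by (rule lin_homD(1)[OF phi unit_vec_carrier[OF rR]])
  show ?thesis
  proof (rule free_mod_lin_hom_eqI[OF rR X phi lin_ext_lin_hom[OF rR X c] _ w])
    fix a assume a: "a \<in> S"
    show "\<phi> (unit_vec R a) = lin_ext R X (\<lambda>a. \<phi> (unit_vec R a)) (unit_vec R a)"
      using lin_ext_unit_vec[OF rR X a, of "\<lambda>a. \<phi> (unit_vec R a)"] c[OF a] by simp
  qed
qed


section \<open>The equational criterion for flatness\<close>

lemma tensor_rel_uminus:
  assumes "u \<in> tensor_rel R F S"
  shows "(\<lambda>p. - u p) \<in> tensor_rel R F S"
proof -
  have "(\<lambda>p. (\<lambda>_. 0::int) p - u p) \<in> tensor_rel R F S"
    by (rule tensor_rel.diff[OF tensor_rel.zero assms])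
  then show ?thesis by simp
qed

lemma tensor_rel_add:
  assumes "u \<in> tensor_rel R F S" "v \<in> tensor_rel R F S"
  shows "(\<lambda>p. u p + v p) \<in> tensor_rel R F S"
proof -
  have "(\<lambda>p. u p - (\<lambda>p. - v p) p) \<in> tensor_rel R F S"
    by (rule tensor_rel.diff[OF assms(1) tensor_rel_uminus[OF assms(2)]])
  then show ?thesis by simp
qed

lemma tensor_rel_sum:
  assumes "finite A" "\<And>i. i \<in> A \<Longrightarrow> f i \<in> tensor_rel R F S"
  shows "(\<lambda>p. \<Sum>i\<in>A. f i p) \<in> tensor_rel R F S"
  using assms
proof (induct A rule: finite_induct)
  case empty
  then show ?case using tensor_rel.zero by simp
next
  case (insert i A)
  have "(\<lambda>p. f i p + (\<lambda>p. \<Sum>i\<in>A. f i p) p) \<in> tensor_rel R F S"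
    by (rule tensor_rel_add) (use insert in auto)
  then show ?case using insert by simp
qed

lemma finite_delta_support: "finite {q. delta p q \<noteq> 0}"
  by (rule finite_subset[of _ "{p}"]) (auto simp: delta_def)

lemma delta3_support: "{p. delta A p - delta B p - delta C p \<noteq> (0::int)} \<subseteq> {A, B, C}"
  by (auto simp: delta_def split: if_splits)

lemma delta2_support: "{p. delta A p - delta B p \<noteq> (0::int)} \<subseteq> {A, B}"
  by (auto simp: delta_def split: if_splits)

lemma tensor_rel_finite:
  assumes "u \<in> tensor_rel R F S"
  shows "finite {p. u p \<noteq> 0}"
  using assms
proof (induct rule: tensor_rel.induct)
  case zero
  then show ?case by simp
next
  case (diff u v)
  have "{p. u p - v p \<noteq> 0} \<subseteq> {p. u p \<noteq> 0} \<union> {p. v p \<noteq> 0}" by auto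
  then show ?case using diff by (meson finite_UnI finite_subset)
next
  case (rel_l a a' x)
  show ?case by (rule finite_subset[OF delta3_support]) simp
next
  case (rel_r a x x')
  show ?case by (rule finite_subset[OF delta3_support]) simp
next
  case (rel_bal a r x)
  show ?case by (rule finite_subset[OF delta2_support]) simp
qed


locale flat_relation = lmod R F for R (structure) and F +
  fixes n :: nat and a :: "nat \<Rightarrow> 'a" and x :: "nat \<Rightarrow> 'b"
  assumes flat: "flat_module R F"
    and a_in: "\<And>i. a i \<in> carrier R" and x_in: "\<And>i. x i \<in> carrier F"
    and rel: "finsum F (\<lambda>i. a i \<odot>\<^bsub>F\<^esub> x i) {..<n} = \<zero>\<^bsub>F\<^esub>"
begin

definition comb :: "(nat \<Rightarrow> 'a) \<Rightarrow> 'a" where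
  "comb c = finsum R (\<lambda>i. a i \<otimes> c i) {..<n}"

definition coeff_vecs :: "(nat \<Rightarrow> 'a) set" where
  "coeff_vecs = {c. \<forall>i. c i \<in> carrier R}"

definition coeff_ideal :: "'a set" where
  "coeff_ideal = comb ` coeff_vecs"

definition syzygies :: "(nat \<Rightarrow> 'a) set" where
  "syzygies = {c \<in> coeff_vecs. comb c = \<zero>}"

definition coeffs :: "'a \<Rightarrow> nat \<Rightarrow> 'a" where
  "coeffs r = (SOME c. c \<in> coeff_vecs \<and> comb c = r)"

lemma comb_closed: "c \<in> coeff_vecs \<Longrightarrow> comb c \<in> carrier R"
  unfolding comb_def coeff_vecs_def using a_in by (intro R.finsum_closed) auto

lemma comb_add: "c \<in> coeff_vecs \<Longrightarrow> d \<in> coeff_vecs \<Longrightarrow> comb (\<lambda>i. c i \<oplus> d i) = comb c \<oplus> comb d"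
  unfolding comb_def coeff_vecs_def using a_in
  by (simp add: r_distr R.finsum_addf Pi_def)

lemma comb_neg: "c \<in> coeff_vecs \<Longrightarrow> comb (\<lambda>i. \<ominus> c i) = \<ominus> comb c"
  unfolding comb_def coeff_vecs_def using a_in
  by (simp add: r_minus R.finsum_neg Pi_def)

lemma comb_diff: "c \<in> coeff_vecs \<Longrightarrow> d \<in> coeff_vecs \<Longrightarrow> comb (\<lambda>i. c i \<ominus> d i) = comb c \<ominus> comb d"
proof -
  assume c: "c \<in> coeff_vecs" and d: "d \<in> coeff_vecs"
  have nd: "(\<lambda>i. \<ominus> d i) \<in> coeff_vecs" using d by (auto simp: coeff_vecs_def)
  have "comb (\<lambda>i. c i \<ominus> d i) = comb (\<lambda>i. c i \<oplus> (\<lambda>i. \<ominus> d i) i)" by (simp add: R.minus_eq)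
  also have "\<dots> = comb c \<oplus> comb (\<lambda>i. \<ominus> d i)" by (rule comb_add[OF c nd])
  also have "\<dots> = comb c \<ominus> comb d" by (simp add: comb_neg[OF d] R.minus_eq)
  finally show ?thesis .
qed

lemma comb_rmul: "c \<in> coeff_vecs \<Longrightarrow> r \<in> carrier R \<Longrightarrow> comb (\<lambda>i. c i \<otimes> r) = comb c \<otimes> r"
proof -
  assume c: "c \<in> coeff_vecs" and r: "r \<in> carrier R"
  have "comb c \<otimes> r = finsum R (\<lambda>i. (a i \<otimes> c i) \<otimes> r) {..<n}"
    unfolding comb_def using a_in c r by (intro R.finsum_ldistr) (auto simp: coeff_vecs_def)
  also have "\<dots> = comb (\<lambda>i. c i \<otimes> r)"
    unfolding comb_def using a_in c r by (intro R.finsum_cong') (auto simp: coeff_vecs_def m_assoc)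
  finally show ?thesis by simp
qed

lemma comb_unit_vec: "j < n \<Longrightarrow> comb (unit_vec R j) = a j"
proof -
  assume j: "j < n"
  have "comb (unit_vec R j) = finsum R (\<lambda>i. if j = i then a i else \<zero>) {..<n}"
    unfolding comb_def using a_in by (intro R.finsum_cong') (auto simp: unit_vec_def)
  also have "\<dots> = a j" using j a_in by (subst R.add.finprod_singleton) auto
  finally show ?thesis .
qed

lemma unit_vec_coeff_vecs: "unit_vec R j \<in> coeff_vecs"
  by (auto simp: coeff_vecs_def unit_vec_def)

lemma coeffs_spec: "r \<in> coeff_ideal \<Longrightarrow> coeffs r \<in> coeff_vecs \<and> comb (coeffs r) = r"
proof -
  assume "r \<in> coeff_ideal"
  then obtain c where "c \<in> coeff_vecs" "comb c = r" by (auto simp: coeff_ideal_def)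
  then show ?thesis unfolding coeffs_def by (rule someI[of "\<lambda>c. c \<in> coeff_vecs \<and> comb c = r", OF conjI])
qed

lemma coeff_ideal_carrier: "coeff_ideal \<subseteq> carrier R"
  unfolding coeff_ideal_def using comb_closed by auto

lemma a_in_coeff_ideal:
  assumes i: "i < n"
  shows "a i \<in> coeff_ideal"
proof -
  have "a i = comb (unit_vec R i)" using comb_unit_vec[OF i] by simp
  then show ?thesis unfolding coeff_ideal_def using unit_vec_coeff_vecs by (rule image_eqI)
qed

lemma coeff_ideal_add:
  assumes r: "r \<in> coeff_ideal" and s: "s \<in> coeff_ideal"
  shows "r \<oplus> s \<in> coeff_ideal"
proof -
  obtain c where c: "r = comb c" "c \<in> coeff_vecs" using r unfolding coeff_ideal_def by (rule imageE)
  obtain d where d: "s = comb d" "d \<in> coeff_vecs" using s unfolding coeff_ideal_def by (rule imageE)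
  have "r \<oplus> s = comb (\<lambda>i. c i \<oplus> d i)" using comb_add[OF c(2) d(2)] c d by simp
  moreover have "(\<lambda>i. c i \<oplus> d i) \<in> coeff_vecs" using c d by (auto simp: coeff_vecs_def)
  ultimately show ?thesis unfolding coeff_ideal_def by (rule image_eqI)
qed

lemma coeff_ideal_rmul:
  assumes r: "r \<in> coeff_ideal" and s: "s \<in> carrier R"
  shows "r \<otimes> s \<in> coeff_ideal"
proof -
  obtain c where c: "r = comb c" "c \<in> coeff_vecs" using r unfolding coeff_ideal_def by (rule imageE)
  have "r \<otimes> s = comb (\<lambda>i. c i \<otimes> s)" using comb_rmul[OF c(2) s] c by simp
  moreover have "(\<lambda>i. c i \<otimes> s) \<in> coeff_vecs" using c s by (auto simp: coeff_vecs_def)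
  ultimately show ?thesis unfolding coeff_ideal_def by (rule image_eqI)
qed

lemma coeff_ideal_neg:
  assumes r: "r \<in> coeff_ideal"
  shows "\<ominus> r \<in> coeff_ideal"
proof -
  obtain c where c: "r = comb c" "c \<in> coeff_vecs" using r unfolding coeff_ideal_def by (rule imageE)
  have "\<ominus> r = comb (\<lambda>i. \<ominus> c i)" using comb_neg[OF c(2)] c by simp
  moreover have "(\<lambda>i. \<ominus> c i) \<in> coeff_vecs" using c by (auto simp: coeff_vecs_def)
  ultimately show ?thesis unfolding coeff_ideal_def by (rule image_eqI)
qed

lemma coeff_ideal_zero: "\<zero> \<in> coeff_ideal"
proof -
  have z: "(\<lambda>i. \<zero>) \<in> coeff_vecs" by (auto simp: coeff_vecs_def)
  have "comb (\<lambda>i. \<zero>) = \<zero>" unfolding comb_def using a_in by (simp add: R.finsum_zero)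
  then show ?thesis unfolding coeff_ideal_def using z by (rule image_eqI[OF sym])
qed

lemma coeff_ideal_right_ideal: "right_ideal R coeff_ideal"
  unfolding right_ideal_def
proof (intro conjI ballI)
  show "subgroup coeff_ideal (add_monoid R)"
  proof (rule subgroup.intro)
    show "coeff_ideal \<subseteq> carrier (add_monoid R)" using coeff_ideal_carrier by simp
    show "\<And>x y. x \<in> coeff_ideal \<Longrightarrow> y \<in> coeff_ideal \<Longrightarrow> x \<otimes>\<^bsub>add_monoid R\<^esub> y \<in> coeff_ideal"
      using coeff_ideal_add by simp
    show "\<one>\<^bsub>add_monoid R\<^esub> \<in> coeff_ideal" using coeff_ideal_zero by simp
    show "\<And>x. x \<in> coeff_ideal \<Longrightarrow> inv\<^bsub>add_monoid R\<^esub> x \<in> coeff_ideal"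
      using coeff_ideal_neg by (simp add: a_inv_def)
  qed
next
  fix r s assume "r \<in> coeff_ideal" "s \<in> carrier R"
  then show "r \<otimes> s \<in> coeff_ideal" by (rule coeff_ideal_rmul)
qed

inductive_set syz_span :: "(nat \<Rightarrow> 'b) set" where
  zero: "(\<lambda>i. \<zero>\<^bsub>F\<^esub>) \<in> syz_span"
| add_smult: "v \<in> syz_span \<Longrightarrow> c \<in> syzygies \<Longrightarrow> y \<in> carrier F \<Longrightarrow> (\<lambda>i. v i \<oplus>\<^bsub>F\<^esub> c i \<odot>\<^bsub>F\<^esub> y) \<in> syz_span"

lemma syz_span_in: "v \<in> syz_span \<Longrightarrow> v i \<in> carrier F"
  by (induct rule: syz_span.induct) (auto simp: syzygies_def coeff_vecs_def)

lemma syz_span_add: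
  assumes v: "v \<in> syz_span" and w: "w \<in> syz_span"
  shows "(\<lambda>i. v i \<oplus>\<^bsub>F\<^esub> w i) \<in> syz_span"
  using w
proof (induct rule: syz_span.induct)
  case zero
  then show ?case using syz_span_in[OF v] v by simp
next
  case (add_smult w c y)
  have "(\<lambda>i. (\<lambda>i. v i \<oplus>\<^bsub>F\<^esub> w i) i \<oplus>\<^bsub>F\<^esub> c i \<odot>\<^bsub>F\<^esub> y) \<in> syz_span"
    using add_smult by (intro syz_span.add_smult) auto
  moreover have "(\<lambda>i. (\<lambda>i. v i \<oplus>\<^bsub>F\<^esub> w i) i \<oplus>\<^bsub>F\<^esub> c i \<odot>\<^bsub>F\<^esub> y)
      = (\<lambda>i. v i \<oplus>\<^bsub>F\<^esub> (w i \<oplus>\<^bsub>F\<^esub> c i \<odot>\<^bsub>F\<^esub> y))"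
    using syz_span_in[OF v] syz_span_in[OF add_smult(1)] add_smult(3,4)
    by (auto simp: M.a_assoc syzygies_def coeff_vecs_def)
  ultimately show ?case by simp
qed

lemma syz_span_single: "c \<in> syzygies \<Longrightarrow> y \<in> carrier F \<Longrightarrow> (\<lambda>i. c i \<odot>\<^bsub>F\<^esub> y) \<in> syz_span"
proof -
  assume c: "c \<in> syzygies" and y: "y \<in> carrier F"
  have "(\<lambda>i. (\<lambda>i. \<zero>\<^bsub>F\<^esub>) i \<oplus>\<^bsub>F\<^esub> c i \<odot>\<^bsub>F\<^esub> y) \<in> syz_span"
    by (rule syz_span.add_smult[OF syz_span.zero c y])
  then show ?thesis using c y by (simp add: syzygies_def coeff_vecs_def)
qed

lemma syzygies_uminus: "c \<in> syzygies \<Longrightarrow> (\<lambda>i. \<ominus> c i) \<in> syzygies"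
  using comb_neg by (auto simp: syzygies_def coeff_vecs_def)

lemma syz_span_neg: "v \<in> syz_span \<Longrightarrow> (\<lambda>i. \<ominus>\<^bsub>F\<^esub> v i) \<in> syz_span"
proof (induct v rule: syz_span.induct)
  case zero
  have e: "(\<lambda>i. \<ominus>\<^bsub>F\<^esub> \<zero>\<^bsub>F\<^esub>) = (\<lambda>i. \<zero>\<^bsub>F\<^esub>)" by (simp add: M.minus_equality[of "\<zero>\<^bsub>F\<^esub>" "\<zero>\<^bsub>F\<^esub>"])
  show ?case unfolding e by (rule syz_span.zero)
next
  case (add_smult v c y)
  have "(\<lambda>i. (\<lambda>i. \<ominus>\<^bsub>F\<^esub> v i) i \<oplus>\<^bsub>F\<^esub> (\<lambda>i. \<ominus> c i) i \<odot>\<^bsub>F\<^esub> y) \<in> syz_span"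
    using add_smult syzygies_uminus by (intro syz_span.add_smult) auto
  moreover have "(\<lambda>i. (\<lambda>i. \<ominus>\<^bsub>F\<^esub> v i) i \<oplus>\<^bsub>F\<^esub> (\<lambda>i. \<ominus> c i) i \<odot>\<^bsub>F\<^esub> y)
      = (\<lambda>i. \<ominus>\<^bsub>F\<^esub> (v i \<oplus>\<^bsub>F\<^esub> c i \<odot>\<^bsub>F\<^esub> y))"
    using syz_span_in[OF add_smult(1)] add_smult(3,4)
    by (auto simp: M.minus_add smult_minus_l syzygies_def coeff_vecs_def)
  ultimately show ?case by simp
qed

lemma syz_span_diff: "v \<in> syz_span \<Longrightarrow> w \<in> syz_span \<Longrightarrow> (\<lambda>i. v i \<ominus>\<^bsub>F\<^esub> w i) \<in> syz_span"
  using syz_span_add[of v "\<lambda>i. \<ominus>\<^bsub>F\<^esub> w i"] syz_span_neg[of w] by (simp add: M.minus_eq)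

lemma syz_span_finsum:
  assumes "finite A" "\<And>j. j \<in> A \<Longrightarrow> (\<lambda>i. f j i) \<in> syz_span"
  shows "(\<lambda>i. finsum F (\<lambda>j. f j i) A) \<in> syz_span"
  using assms
proof (induct A rule: finite_induct)
  case empty
  then show ?case using syz_span.zero by simp
next
  case (insert j A)
  have fin: "\<And>j' i. j' \<in> insert j A \<Longrightarrow> f j' i \<in> carrier F" using insert syz_span_in by blast
  have "(\<lambda>i. (\<lambda>i. f j i) i \<oplus>\<^bsub>F\<^esub> (\<lambda>i. finsum F (\<lambda>j. f j i) A) i) \<in> syz_span"
    using insert by (intro syz_span_add) auto
  moreover have "\<And>i. finsum F (\<lambda>j. f j i) (insert j A) = f j i \<oplus>\<^bsub>F\<^esub> finsum F (\<lambda>j. f j i) A"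
    using insert fin by (intro M.finsum_insert) auto
  ultimately show ?case by simp
qed

lemma syz_span_explicit:
  "v \<in> syz_span \<Longrightarrow> \<exists>(m::nat) (b::nat \<Rightarrow> nat \<Rightarrow> 'a) (y::nat \<Rightarrow> 'b). (\<forall>i j. b i j \<in> carrier R) \<and> (\<forall>j. y j \<in> carrier F)
     \<and> (\<forall>j<m. comb (\<lambda>i. b i j) = \<zero>) \<and> (\<forall>i. v i = finsum F (\<lambda>j. b i j \<odot>\<^bsub>F\<^esub> y j) {..<m})"
proof (induct rule: syz_span.induct)
  case zero
  show ?case by (intro exI[of _ "0::nat"] exI[of _ "\<lambda>i j. \<zero>"] exI[of _ "\<lambda>j. \<zero>\<^bsub>F\<^esub>"]) simp
next
  case (add_smult v c y)
  obtain m :: nat and b ys where b: "\<forall>i j. b i j \<in> carrier R" and ys: "\<forall>j. ys j \<in> carrier F"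
    and k: "\<forall>j<m. comb (\<lambda>i. b i j) = \<zero>" and v: "\<forall>i. v i = finsum F (\<lambda>j. b i j \<odot>\<^bsub>F\<^esub> ys j) {..<m}"
    using add_smult(2) by (elim exE conjE) (rule that)
  define b' where "b' = (\<lambda>i j. if j = m then c i else b i j)"
  define y' where "y' = (\<lambda>j. if j = m then y else ys j)"
  have c: "\<forall>i. c i \<in> carrier R" "comb c = \<zero>" using add_smult(3) by (auto simp: syzygies_def coeff_vecs_def)
  have b'c: "\<forall>i j. b' i j \<in> carrier R" using b c by (simp add: b'_def)
  have y'c: "\<forall>j. y' j \<in> carrier F" using ys add_smult(4) by (simp add: y'_def)
  have k': "\<forall>j<Suc m. comb (\<lambda>i. b' i j) = \<zero>"
    using k c by (auto simp: b'_def less_Suc_eq)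
  have v': "\<forall>i. v i \<oplus>\<^bsub>F\<^esub> c i \<odot>\<^bsub>F\<^esub> y = finsum F (\<lambda>j. b' i j \<odot>\<^bsub>F\<^esub> y' j) {..<Suc m}"
  proof
    fix i
    have "finsum F (\<lambda>j. b' i j \<odot>\<^bsub>F\<^esub> y' j) {..<Suc m}
        = b' i m \<odot>\<^bsub>F\<^esub> y' m \<oplus>\<^bsub>F\<^esub> finsum F (\<lambda>j. b' i j \<odot>\<^bsub>F\<^esub> y' j) {..<m}"
      unfolding lessThan_Suc using b'c y'c by (intro M.finsum_insert) auto
    also have "finsum F (\<lambda>j. b' i j \<odot>\<^bsub>F\<^esub> y' j) {..<m} = v i"
      using v b ys by (auto simp: b'_def y'_def intro!: M.finsum_cong')
    finally show "v i \<oplus>\<^bsub>F\<^esub> c i \<odot>\<^bsub>F\<^esub> y = finsum F (\<lambda>j. b' i j \<odot>\<^bsub>F\<^esub> y' j) {..<Suc m}"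
      using syz_span_in[OF add_smult(1)] c add_smult(4) by (simp add: b'_def y'_def M.a_comm)
  qed
  show ?case using b'c y'c k' v' by blast
qed

text \<open>coeffs r is a chosen coefficient vector c with r = sum a i c i. Coord k is the k-th
  coordinate of the map that lifts the generator r \<otimes> y of \<open>I \<otimes> F\<close> to \<open>R\<^sup>n \<otimes> F = F\<^sup>n\<close>
  by means of these coefficients; it is well defined on \<open>I \<otimes> F\<close> only up to syzygies.\<close>

definition coord :: "nat \<Rightarrow> 'a \<times> 'b \<Rightarrow> 'b" where
  "coord k p = (if fst p \<in> coeff_ideal \<and> snd p \<in> carrier F then coeffs (fst p) k \<odot>\<^bsub>F\<^esub> snd p else \<zero>\<^bsub>F\<^esub>)"

definition Coord :: "nat \<Rightarrow> ('a \<times> 'b \<Rightarrow> int) \<Rightarrow> 'b" where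
  "Coord k u = finsum F (\<lambda>p. [u p] \<cdot>\<^bsub>F\<^esub> coord k p) {p. u p \<noteq> 0}"

lemma coeffs_closed: "r \<in> coeff_ideal \<Longrightarrow> coeffs r k \<in> carrier R"
  using coeffs_spec by (auto simp: coeff_vecs_def)

lemma coord_closed: "coord k p \<in> carrier F"
  unfolding coord_def using coeffs_closed by auto

lemma coord_eq: "r \<in> coeff_ideal \<Longrightarrow> y \<in> carrier F \<Longrightarrow> coord k (r, y) = coeffs r k \<odot>\<^bsub>F\<^esub> y"
  by (simp add: coord_def)

lemma add_pow_int_zero: "[(0::int)] \<cdot>\<^bsub>F\<^esub> y = \<zero>\<^bsub>F\<^esub>"
  by (simp add: add_pow_def)

lemma Coord_sum:
  assumes "finite A" "{p. u p \<noteq> 0} \<subseteq> A"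
  shows "Coord k u = finsum F (\<lambda>p. [u p] \<cdot>\<^bsub>F\<^esub> coord k p) A"
  unfolding Coord_def using assms coord_closed
  by (intro M.add.finprod_mono_neutral_cong_left) (auto simp: add_pow_int_zero)

lemma Coord_add:
  assumes fu: "finite {p. u p \<noteq> 0}" and fv: "finite {p. v p \<noteq> 0}"
  shows "Coord k (\<lambda>p. u p + v p) = Coord k u \<oplus>\<^bsub>F\<^esub> Coord k v"
proof -
  let ?A = "{p. u p \<noteq> 0} \<union> {p. v p \<noteq> 0}"
  have fA: "finite ?A" using fu fv by simp
  have s: "{p. u p + v p \<noteq> 0} \<subseteq> ?A" by auto
  have "Coord k (\<lambda>p. u p + v p) = finsum F (\<lambda>p. [(u p + v p)] \<cdot>\<^bsub>F\<^esub> coord k p) ?A"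
    using Coord_sum[OF fA, of "\<lambda>p. u p + v p"] s by simp
  also have "\<dots> = finsum F (\<lambda>p. [u p] \<cdot>\<^bsub>F\<^esub> coord k p \<oplus>\<^bsub>F\<^esub> [v p] \<cdot>\<^bsub>F\<^esub> coord k p) ?A"
    using coord_closed by (intro M.finsum_cong') (auto simp: M.add.int_pow_mult)
  also have "\<dots> = finsum F (\<lambda>p. [u p] \<cdot>\<^bsub>F\<^esub> coord k p) ?A \<oplus>\<^bsub>F\<^esub> finsum F (\<lambda>p. [v p] \<cdot>\<^bsub>F\<^esub> coord k p) ?A"
    using coord_closed by (intro M.finsum_addf) auto
  also have "\<dots> = Coord k u \<oplus>\<^bsub>F\<^esub> Coord k v"
    using Coord_sum[OF fA, of u] Coord_sum[OF fA, of v] by simp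
  finally show ?thesis .
qed

lemma Coord_neg:
  assumes fu: "finite {p. u p \<noteq> 0}"
  shows "Coord k (\<lambda>p. - u p) = \<ominus>\<^bsub>F\<^esub> Coord k u"
proof -
  have "Coord k (\<lambda>p. - u p) = finsum F (\<lambda>p. [(- u p)] \<cdot>\<^bsub>F\<^esub> coord k p) {p. u p \<noteq> 0}"
    using Coord_sum[OF fu, of "\<lambda>p. - u p"] by simp
  also have "\<dots> = finsum F (\<lambda>p. \<ominus>\<^bsub>F\<^esub> ([u p] \<cdot>\<^bsub>F\<^esub> coord k p)) {p. u p \<noteq> 0}"
    using coord_closed by (intro M.finsum_cong') (auto simp: M.add.int_pow_neg)
  also have "\<dots> = \<ominus>\<^bsub>F\<^esub> Coord k u"
    unfolding Coord_def using coord_closed by (intro M.finsum_neg) auto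
  finally show ?thesis .
qed

lemma Coord_diff:
  assumes fu: "finite {p. u p \<noteq> 0}" and fv: "finite {p. v p \<noteq> 0}"
  shows "Coord k (\<lambda>p. u p - v p) = Coord k u \<ominus>\<^bsub>F\<^esub> Coord k v"
proof -
  have fv': "finite {p. - v p \<noteq> 0}" using fv by simp
  have "Coord k (\<lambda>p. u p - v p) = Coord k (\<lambda>p. u p + (\<lambda>p. - v p) p)" by simp
  also have "\<dots> = Coord k u \<oplus>\<^bsub>F\<^esub> Coord k (\<lambda>p. - v p)" by (rule Coord_add[OF fu fv'])
  also have "\<dots> = Coord k u \<ominus>\<^bsub>F\<^esub> Coord k v" by (simp add: Coord_neg[OF fv] M.minus_eq)
  finally show ?thesis .
qed

lemma Coord_delta: "Coord k (delta p) = coord k p"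
proof -
  have "Coord k (delta p) = finsum F (\<lambda>q. [delta p q] \<cdot>\<^bsub>F\<^esub> coord k q) {p}"
    by (rule Coord_sum) (auto simp: delta_def)
  also have "\<dots> = coord k p" using coord_closed by (simp add: delta_def)
  finally show ?thesis .
qed

lemma Coord_zero: "Coord k (\<lambda>_. 0) = \<zero>\<^bsub>F\<^esub>"
  by (simp add: Coord_def)

lemma Coord_delta2: "Coord k (\<lambda>p. delta A p - delta B p) = coord k A \<ominus>\<^bsub>F\<^esub> coord k B"
  using Coord_diff[OF finite_delta_support finite_delta_support] by (simp add: Coord_delta)

lemma Coord_delta3:
  "Coord k (\<lambda>p. delta A p - delta B p - delta C p) = coord k A \<ominus>\<^bsub>F\<^esub> coord k B \<ominus>\<^bsub>F\<^esub> coord k C"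
proof -
  have "finite {p. delta A p - delta B p \<noteq> 0}"
    by (rule finite_subset[OF delta2_support]) simp
  from Coord_diff[OF this finite_delta_support] show ?thesis
    by (simp add: Coord_delta2 Coord_delta)
qed

lemma Coord_rel_l_syz_span:
  assumes r: "r \<in> coeff_ideal" and r': "r' \<in> coeff_ideal" and y: "y \<in> carrier F"
  shows "(\<lambda>k. Coord k (\<lambda>p. delta (r \<oplus> r', y) p - delta (r, y) p - delta (r', y) p)) \<in> syz_span"
proof -
  have rr': "r \<oplus> r' \<in> coeff_ideal" using r r' by (rule coeff_ideal_add)
  have rc: "r \<in> carrier R" "r' \<in> carrier R" using r r' coeff_ideal_carrier by auto
  define c where "c = (\<lambda>k. coeffs (r \<oplus> r') k \<ominus> coeffs r k \<ominus> coeffs r' k)"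
  have cs: "coeffs (r \<oplus> r') \<in> coeff_vecs" "coeffs r \<in> coeff_vecs" "coeffs r' \<in> coeff_vecs"
    using coeffs_spec rr' r r' by auto
  have "comb c = comb (\<lambda>k. coeffs (r \<oplus> r') k \<ominus> coeffs r k) \<ominus> comb (coeffs r')"
    unfolding c_def using cs by (intro comb_diff) (auto simp: coeff_vecs_def)
  also have "\<dots> = (r \<oplus> r') \<ominus> r \<ominus> r'"
    using comb_diff[OF cs(1,2)] coeffs_spec rr' r r' by simp
  also have "\<dots> = \<zero>" using rc by algebra
  finally have "c \<in> syzygies" using cs by (simp add: syzygies_def c_def coeff_vecs_def)
  moreover have "Coord k (\<lambda>p. delta (r \<oplus> r', y) p - delta (r, y) p - delta (r', y) p) = c k \<odot>\<^bsub>F\<^esub> y" for k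
    using cs rr' r r' y
    by (simp add: Coord_delta3 coord_eq c_def smult_diff_l coeff_vecs_def)
  ultimately show ?thesis using syz_span_single[OF _ y] by simp
qed

lemma Coord_rel_r_eq_zero:
  assumes r: "r \<in> coeff_ideal" and y: "y \<in> carrier F" and y': "y' \<in> carrier F"
  shows "Coord k (\<lambda>p. delta (r, y \<oplus>\<^bsub>F\<^esub> y') p - delta (r, y) p - delta (r, y') p) = \<zero>\<^bsub>F\<^esub>"
proof -
  define c where "c = coeffs r k"
  have c: "c \<in> carrier R" unfolding c_def using coeffs_closed r by auto
  have "c \<odot>\<^bsub>F\<^esub> (y \<oplus>\<^bsub>F\<^esub> y') \<ominus>\<^bsub>F\<^esub> c \<odot>\<^bsub>F\<^esub> y \<ominus>\<^bsub>F\<^esub> c \<odot>\<^bsub>F\<^esub> y'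
      = (c \<odot>\<^bsub>F\<^esub> y \<ominus>\<^bsub>F\<^esub> c \<odot>\<^bsub>F\<^esub> y) \<oplus>\<^bsub>F\<^esub> (c \<odot>\<^bsub>F\<^esub> y' \<ominus>\<^bsub>F\<^esub> c \<odot>\<^bsub>F\<^esub> y')"
    using c y y' by (simp add: smult_r_distr M.minus_eq M.minus_add M.a_ac)
  also have "\<dots> = \<zero>\<^bsub>F\<^esub>" using c y y' by (simp add: M.minus_eq M.r_neg)
  finally show ?thesis using r y y' by (simp add: Coord_delta3 coord_eq c_def)
qed

lemma Coord_rel_bal_syz_span:
  assumes r: "r \<in> coeff_ideal" and s: "s \<in> carrier R" and y: "y \<in> carrier F"
  shows "(\<lambda>k. Coord k (\<lambda>p. delta (r \<otimes> s, y) p - delta (r, s \<odot>\<^bsub>F\<^esub> y) p)) \<in> syz_span"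
proof -
  have rs: "r \<otimes> s \<in> coeff_ideal" using r s by (rule coeff_ideal_rmul)
  have rc: "r \<in> carrier R" using r coeff_ideal_carrier by auto
  define c where "c = (\<lambda>k. coeffs (r \<otimes> s) k \<ominus> coeffs r k \<otimes> s)"
  have cs: "coeffs (r \<otimes> s) \<in> coeff_vecs" "coeffs r \<in> coeff_vecs"
    using coeffs_spec rs r by auto
  have crs: "(\<lambda>k. coeffs r k \<otimes> s) \<in> coeff_vecs" using cs s by (auto simp: coeff_vecs_def)
  have "comb c = comb (coeffs (r \<otimes> s)) \<ominus> comb (\<lambda>k. coeffs r k \<otimes> s)"
    unfolding c_def by (rule comb_diff[OF cs(1) crs])
  also have "\<dots> = \<zero>"
    using comb_rmul[OF cs(2) s] coeffs_spec rs r rc s by (simp add: R.r_neg R.minus_eq)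
  finally have "c \<in> syzygies" using cs s by (simp add: syzygies_def c_def coeff_vecs_def)
  moreover have "Coord k (\<lambda>p. delta (r \<otimes> s, y) p - delta (r, s \<odot>\<^bsub>F\<^esub> y) p) = c k \<odot>\<^bsub>F\<^esub> y" for k
    using cs rs r s y
    by (simp add: Coord_delta2 coord_eq c_def smult_diff_l smult_assoc1 coeff_vecs_def)
  ultimately show ?thesis using syz_span_single[OF _ y] by simp
qed

text \<open>The preimages chosen by coeffs are additive and right linear only up to syzygies,
  so the coordinates of every defining relation of \<open>I \<otimes> F\<close> lie in the syzygy span.\<close>

lemma Coord_syz_span:
  assumes "u \<in> tensor_rel R F coeff_ideal"
  shows "(\<lambda>k. Coord k u) \<in> syz_span"
  using assms
proof (induct rule: tensor_rel.induct)
  case zero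
  show ?case unfolding Coord_zero by (rule syz_span.zero)
next
  case (diff u v)
  then show ?case
    using Coord_diff[OF tensor_rel_finite[OF diff(1)] tensor_rel_finite[OF diff(3)]] syz_span_diff
    by simp
next
  case (rel_l r r' y)
  then show ?case by (rule Coord_rel_l_syz_span)
next
  case (rel_r r y y')
  then show ?case using syz_span.zero by (simp add: Coord_rel_r_eq_zero)
next
  case (rel_bal r s y)
  then show ?case by (rule Coord_rel_bal_syz_span)
qed

definition rel_tensor :: "nat \<Rightarrow> 'a \<times> 'b \<Rightarrow> int" where
  "rel_tensor m = (\<lambda>p. \<Sum>i<m. delta (a i, x i) p)"

lemma rel_tensor_supp: "{p. rel_tensor m p \<noteq> 0} \<subseteq> (\<lambda>i. (a i, x i)) ` {..<m}"
proof
  fix p assume "p \<in> {p. rel_tensor m p \<noteq> 0}"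
  then have "(\<Sum>i<m. delta (a i, x i) p) \<noteq> 0" by (simp add: rel_tensor_def)
  then obtain i where "i < m" "delta (a i, x i) p \<noteq> 0"
    by (metis (mono_tags, lifting) lessThan_iff sum.neutral)
  then show "p \<in> (\<lambda>i. (a i, x i)) ` {..<m}" by (auto simp: delta_def split: if_splits)
qed

lemma rel_tensor_finite: "finite {p. rel_tensor m p \<noteq> 0}"
  by (rule finite_subset[OF rel_tensor_supp]) simp

lemma Coord_rel_tensor_sum: "Coord k (rel_tensor m) = finsum F (\<lambda>i. coord k (a i, x i)) {..<m}"
proof (induct m)
  case 0
  then show ?case by (simp add: rel_tensor_def Coord_zero)
next
  case (Suc m)
  have e: "rel_tensor (Suc m) = (\<lambda>p. rel_tensor m p + delta (a m, x m) p)"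
    by (simp add: rel_tensor_def)
  have "Coord k (rel_tensor (Suc m)) = Coord k (rel_tensor m) \<oplus>\<^bsub>F\<^esub> Coord k (delta (a m, x m))"
    unfolding e by (rule Coord_add[OF rel_tensor_finite finite_delta_support])
  also have "\<dots> = coord k (a m, x m) \<oplus>\<^bsub>F\<^esub> finsum F (\<lambda>i. coord k (a i, x i)) {..<m}"
    using Suc coord_closed by (simp add: Coord_delta M.a_comm)
  also have "\<dots> = finsum F (\<lambda>i. coord k (a i, x i)) {..<Suc m}"
    unfolding lessThan_Suc using coord_closed by (intro M.finsum_insert[symmetric]) auto
  finally show ?case .
qed

lemma delta_one_zero_in_tensor_rel: "delta (\<one>, \<zero>\<^bsub>F\<^esub>) \<in> tensor_rel R F (carrier R)"
proof -
  have "(\<lambda>p. delta (\<one>, \<zero>\<^bsub>F\<^esub> \<oplus>\<^bsub>F\<^esub> \<zero>\<^bsub>F\<^esub>) p - delta (\<one>, \<zero>\<^bsub>F\<^esub>) p - delta (\<one>, \<zero>\<^bsub>F\<^esub>) p)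
      \<in> tensor_rel R F (carrier R)"
    by (rule tensor_rel.rel_r) auto
  then have "(\<lambda>p. - delta (\<one>, \<zero>\<^bsub>F\<^esub>) p) \<in> tensor_rel R F (carrier R)" by simp
  from tensor_rel_uminus[OF this] show ?thesis by simp
qed

lemma sum_delta_in_tensor_rel: "(\<lambda>p. (\<Sum>i<m. delta (\<one>, a i \<odot>\<^bsub>F\<^esub> x i) p)
      - delta (\<one>, finsum F (\<lambda>i. a i \<odot>\<^bsub>F\<^esub> x i) {..<m}) p) \<in> tensor_rel R F (carrier R)"
proof (induct m)
  case 0
  show ?case using tensor_rel_uminus[OF delta_one_zero_in_tensor_rel] by simp
next
  case (Suc m)
  let ?t = "a m \<odot>\<^bsub>F\<^esub> x m"
  let ?S = "finsum F (\<lambda>i. a i \<odot>\<^bsub>F\<^esub> x i) {..<m}"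
  have tS: "?t \<in> carrier F" "?S \<in> carrier F" using a_in x_in by (auto intro: M.finsum_closed)
  have S: "finsum F (\<lambda>i. a i \<odot>\<^bsub>F\<^esub> x i) {..<Suc m} = ?t \<oplus>\<^bsub>F\<^esub> ?S"
    unfolding lessThan_Suc using a_in x_in by (intro M.finsum_insert) auto
  have g: "(\<lambda>p. delta (\<one>, ?t \<oplus>\<^bsub>F\<^esub> ?S) p - delta (\<one>, ?t) p - delta (\<one>, ?S) p) \<in> tensor_rel R F (carrier R)"
    by (rule tensor_rel.rel_r) (use tS in auto)
  have "(\<lambda>p. (\<lambda>p. (\<Sum>i<m. delta (\<one>, a i \<odot>\<^bsub>F\<^esub> x i) p) - delta (\<one>, ?S) p) p
      - (\<lambda>p. delta (\<one>, ?t \<oplus>\<^bsub>F\<^esub> ?S) p - delta (\<one>, ?t) p - delta (\<one>, ?S) p) p) \<in> tensor_rel R F (carrier R)"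
    by (rule tensor_rel.diff[OF Suc g])
  then show ?case unfolding S by (simp add: algebra_simps)
qed

text \<open>In \<open>R \<otimes> F\<close> each a i \<otimes> x i equals 1 \<otimes> a i x i, and these add up to 1 \<otimes> 0 = 0.\<close>

lemma rel_tensor_in_tensor_rel: "rel_tensor n \<in> tensor_rel R F (carrier R)"
proof -
  have A: "(\<lambda>p. \<Sum>i<n. (\<lambda>i p. delta (a i, x i) p - delta (\<one>, a i \<odot>\<^bsub>F\<^esub> x i) p) i p) \<in> tensor_rel R F (carrier R)"
  proof (rule tensor_rel_sum)
    fix i
    have "(\<lambda>p. delta (\<one> \<otimes> a i, x i) p - delta (\<one>, a i \<odot>\<^bsub>F\<^esub> x i) p) \<in> tensor_rel R F (carrier R)"
      by (rule tensor_rel.rel_bal) (use a_in x_in in auto)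
    then show "(\<lambda>p. delta (a i, x i) p - delta (\<one>, a i \<odot>\<^bsub>F\<^esub> x i) p) \<in> tensor_rel R F (carrier R)"
      using a_in by simp
  qed simp
  have B: "(\<lambda>p. (\<Sum>i<n. delta (\<one>, a i \<odot>\<^bsub>F\<^esub> x i) p) - delta (\<one>, \<zero>\<^bsub>F\<^esub>) p) \<in> tensor_rel R F (carrier R)"
    using sum_delta_in_tensor_rel[of n] rel by simp
  have "(\<lambda>p. (\<lambda>p. (\<lambda>p. \<Sum>i<n. (\<lambda>i p. delta (a i, x i) p - delta (\<one>, a i \<odot>\<^bsub>F\<^esub> x i) p) i p) p
      + (\<lambda>p. (\<Sum>i<n. delta (\<one>, a i \<odot>\<^bsub>F\<^esub> x i) p) - delta (\<one>, \<zero>\<^bsub>F\<^esub>) p) p) p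
      + delta (\<one>, \<zero>\<^bsub>F\<^esub>) p) \<in> tensor_rel R F (carrier R)"
    by (rule tensor_rel_add[OF tensor_rel_add[OF A B] delta_one_zero_in_tensor_rel])
  then show ?thesis by (simp add: rel_tensor_def sum_subtractf)
qed

lemma rel_tensor_in_ideal_tensor_rel: "rel_tensor n \<in> tensor_rel R F coeff_ideal"
proof -
  have fl: "\<forall>I. right_ideal R I \<longrightarrow>
       (\<forall>u :: 'a \<times> 'b \<Rightarrow> int. finite {p. u p \<noteq> 0} \<and> {p. u p \<noteq> 0} \<subseteq> I \<times> carrier F
          \<longrightarrow> u \<in> tensor_rel R F (carrier R) \<longrightarrow> u \<in> tensor_rel R F I)"
    using flat by (simp add: flat_module_def)
  have s: "{p. rel_tensor n p \<noteq> 0} \<subseteq> coeff_ideal \<times> carrier F"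
    using rel_tensor_supp[of n] a_in_coeff_ideal x_in by auto
  show ?thesis using fl coeff_ideal_right_ideal rel_tensor_finite s rel_tensor_in_tensor_rel by blast
qed

lemma Coord_rel_tensor: "Coord k (rel_tensor n) = finsum F (\<lambda>i. coeffs (a i) k \<odot>\<^bsub>F\<^esub> x i) {..<n}"
  unfolding Coord_rel_tensor_sum using a_in_coeff_ideal x_in coeffs_closed
  by (intro M.finsum_cong') (auto simp: coord_eq)

lemma unit_vec_minus_coeffs_syzygy:
  assumes i: "i < n"
  shows "(\<lambda>k. unit_vec R i k \<ominus> coeffs (a i) k) \<in> syzygies"
proof -
  have cs: "coeffs (a i) \<in> coeff_vecs" "comb (coeffs (a i)) = a i"
    using coeffs_spec a_in_coeff_ideal i by auto
  have "comb (\<lambda>k. unit_vec R i k \<ominus> coeffs (a i) k) = a i \<ominus> a i"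
    using comb_diff[OF unit_vec_coeff_vecs cs(1)] comb_unit_vec[OF i] cs(2) by simp
  then show ?thesis
    using cs(1) a_in by (auto simp: syzygies_def coeff_vecs_def unit_vec_def R.r_neg R.minus_eq)
qed

lemma unit_coords_in_syz_span: "(\<lambda>k. finsum F (\<lambda>i. unit_vec R i k \<odot>\<^bsub>F\<^esub> x i) {..<n}) \<in> syz_span"
proof -
  have cR: "\<And>i k. i < n \<Longrightarrow> coeffs (a i) k \<in> carrier R"
    using coeffs_closed a_in_coeff_ideal by auto
  have uR: "\<And>i k. unit_vec R i k \<in> carrier R" by (simp add: unit_vec_def)
  have "(\<lambda>k. Coord k (rel_tensor n)
      \<oplus>\<^bsub>F\<^esub> finsum F (\<lambda>i. (unit_vec R i k \<ominus> coeffs (a i) k) \<odot>\<^bsub>F\<^esub> x i) {..<n}) \<in> syz_span"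
    using Coord_syz_span[OF rel_tensor_in_ideal_tensor_rel] syz_span_single[OF unit_vec_minus_coeffs_syzygy x_in]
    by (intro syz_span_add syz_span_finsum) auto
  moreover have "Coord k (rel_tensor n)
      \<oplus>\<^bsub>F\<^esub> finsum F (\<lambda>i. (unit_vec R i k \<ominus> coeffs (a i) k) \<odot>\<^bsub>F\<^esub> x i) {..<n}
      = finsum F (\<lambda>i. unit_vec R i k \<odot>\<^bsub>F\<^esub> x i) {..<n}" for k
  proof -
    have add_diff: "c \<oplus> (u \<ominus> c) = u" if "c \<in> carrier R" "u \<in> carrier R" for c u
      using that by (simp add: R.minus_eq R.a_lcomm[of c u] R.r_neg)
    have "Coord k (rel_tensor n)
        \<oplus>\<^bsub>F\<^esub> finsum F (\<lambda>i. (unit_vec R i k \<ominus> coeffs (a i) k) \<odot>\<^bsub>F\<^esub> x i) {..<n}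
      = finsum F (\<lambda>i. coeffs (a i) k \<odot>\<^bsub>F\<^esub> x i
          \<oplus>\<^bsub>F\<^esub> (unit_vec R i k \<ominus> coeffs (a i) k) \<odot>\<^bsub>F\<^esub> x i) {..<n}"
      unfolding Coord_rel_tensor using cR uR x_in
      by (intro M.finsum_addf[symmetric]) (auto intro!: smult_closed R.minus_closed)
    also have "\<dots> = finsum F (\<lambda>i. unit_vec R i k \<odot>\<^bsub>F\<^esub> x i) {..<n}"
    proof (intro M.finsum_cong')
      fix i assume "i \<in> {..<n}"
      then have c: "coeffs (a i) k \<in> carrier R" using cR by simp
      have "coeffs (a i) k \<odot>\<^bsub>F\<^esub> x i \<oplus>\<^bsub>F\<^esub> (unit_vec R i k \<ominus> coeffs (a i) k) \<odot>\<^bsub>F\<^esub> x i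
          = (coeffs (a i) k \<oplus> (unit_vec R i k \<ominus> coeffs (a i) k)) \<odot>\<^bsub>F\<^esub> x i"
        using c uR x_in by (intro smult_l_distr[symmetric] R.minus_closed) auto
      also have "\<dots> = unit_vec R i k \<odot>\<^bsub>F\<^esub> x i" by (simp only: add_diff[OF c uR[of i k]])
      finally show "coeffs (a i) k \<odot>\<^bsub>F\<^esub> x i \<oplus>\<^bsub>F\<^esub> (unit_vec R i k \<ominus> coeffs (a i) k) \<odot>\<^bsub>F\<^esub> x i
          = unit_vec R i k \<odot>\<^bsub>F\<^esub> x i" .
    qed (use uR x_in in \<open>auto intro!: smult_closed\<close>)
    finally show ?thesis .
  qed
  ultimately show ?thesis by simp
qed

lemma finsum_unit_vec_smult: "k < n \<Longrightarrow> finsum F (\<lambda>i. unit_vec R i k \<odot>\<^bsub>F\<^esub> x i) {..<n} = x k"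
proof -
  assume k: "k < n"
  have "finsum F (\<lambda>i. unit_vec R i k \<odot>\<^bsub>F\<^esub> x i) {..<n} = finsum F (\<lambda>i. if k = i then x i else \<zero>\<^bsub>F\<^esub>) {..<n}"
    using x_in by (intro M.finsum_cong') (auto simp: unit_vec_def)
  also have "\<dots> = x k" using k x_in by (subst M.add.finprod_singleton) auto
  finally show ?thesis .
qed

theorem equational_criterion:
  "\<exists>(m::nat) (b::nat \<Rightarrow> nat \<Rightarrow> 'a) (y::nat \<Rightarrow> 'b). (\<forall>i j. b i j \<in> carrier R) \<and> (\<forall>j. y j \<in> carrier F)
     \<and> (\<forall>j<m. finsum R (\<lambda>i. a i \<otimes> b i j) {..<n} = \<zero>)
     \<and> (\<forall>k<n. x k = finsum F (\<lambda>j. b k j \<odot>\<^bsub>F\<^esub> y j) {..<m})"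
proof -
  obtain m :: nat and b y where b: "\<forall>i j. b i j \<in> carrier R" and y: "\<forall>j. y j \<in> carrier F"
    and syz: "\<forall>j<m. comb (\<lambda>i. b i j) = \<zero>"
    and coords: "\<forall>k. finsum F (\<lambda>i. unit_vec R i k \<odot>\<^bsub>F\<^esub> x i) {..<n} = finsum F (\<lambda>j. b k j \<odot>\<^bsub>F\<^esub> y j) {..<m}"
    using syz_span_explicit[OF unit_coords_in_syz_span] by (elim exE conjE) (rule that)
  have "\<forall>j<m. finsum R (\<lambda>i. a i \<otimes> b i j) {..<n} = \<zero>" using syz by (simp add: comb_def)
  moreover have "x k = finsum F (\<lambda>j. b k j \<odot>\<^bsub>F\<^esub> y j) {..<m}" if k: "k < n" for k
    using finsum_unit_vec_smult[OF k] coords by metis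
  ultimately show ?thesis using b y by blast
qed

end


lemma flat_module_lmod: "flat_module R F \<Longrightarrow> lmod R F"
  by (simp add: flat_module_def left_module_lmod)

lemma flat_equational_criterion:
  assumes flat: "flat_module R F" and a: "\<And>i. a i \<in> carrier R" and x: "\<And>i. x i \<in> carrier F"
    and rel: "finsum F (\<lambda>i. a i \<odot>\<^bsub>F\<^esub> x i) {..<n} = \<zero>\<^bsub>F\<^esub>"
  shows "\<exists>(m::nat) (b::nat \<Rightarrow> nat \<Rightarrow> 'a) (y::nat \<Rightarrow> 'b). (\<forall>i j. b i j \<in> carrier R) \<and> (\<forall>j. y j \<in> carrier F)
     \<and> (\<forall>j<m. finsum R (\<lambda>i. a i \<otimes>\<^bsub>R\<^esub> b i j) {..<n} = \<zero>\<^bsub>R\<^esub>)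
     \<and> (\<forall>k<n. x k = finsum F (\<lambda>j. b k j \<odot>\<^bsub>F\<^esub> y j) {..<m})"
proof -
  interpret flat_relation R F n a x
    by (intro flat_relation.intro flat_module_lmod[OF flat] flat_relation_axioms.intro flat a x rel)
  show ?thesis by (rule equational_criterion)
qed

section \<open>Maps from finitely presented to flat modules\<close>

lemma free_mod_lin_hom_eq_finsum:
  fixes n :: nat
  assumes rR: "ring R" and X: "lmod R X"
    and phi: "\<phi> \<in> lin_hom R (free_mod R {..<n}) X" and w: "w \<in> carrier (free_mod R {..<n})"
  shows "\<phi> w = finsum X (\<lambda>i. w i \<odot>\<^bsub>X\<^esub> \<phi> (unit_vec R i)) {..<n}"
proof -
  have "\<phi> w = lin_ext R X (\<lambda>i. \<phi> (unit_vec R i)) w"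
    by (rule free_mod_lin_hom_eq_lin_ext[OF rR X phi w])
  also have "\<dots> = finsum X (\<lambda>i. w i \<odot>\<^bsub>X\<^esub> \<phi> (unit_vec R i)) {..<n}"
    using supp_free_mod[OF w] lin_homD(1)[OF phi unit_vec_carrier[OF rR]]
    by (intro lin_ext_eq_finsum[OF X w]) auto
  finally show ?thesis .
qed

definition row_map :: "'r ring \<Rightarrow> nat \<Rightarrow> (nat \<Rightarrow> nat \<Rightarrow> 'r) \<Rightarrow> (nat \<Rightarrow> 'r) \<Rightarrow> nat \<Rightarrow> 'r" where
  "row_map R m b = lin_ext R (free_mod R {..<m}) (\<lambda>i j. if j < m then b i j else \<zero>\<^bsub>R\<^esub>)"

lemma row_free_mod:
  fixes m :: nat
  assumes "ring R" and "\<And>i j. b i j \<in> carrier R"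
  shows "(\<lambda>j. if j < m then b i j else \<zero>\<^bsub>R\<^esub>) \<in> carrier (free_mod R {..<m})"
proof -
  interpret ring R by fact
  have "finite {j. (if j < m then b i j else \<zero>\<^bsub>R\<^esub>) \<noteq> \<zero>\<^bsub>R\<^esub>}"
    by (rule finite_subset[of _ "{..<m}"]) auto
  then show ?thesis using assms(2) by (intro free_mod_carrierI) auto
qed

lemma row_map_lin_hom:
  assumes rR: "ring R" and b: "\<And>i j. b i j \<in> carrier R"
  shows "row_map R m b \<in> lin_hom R (free_mod R S) (free_mod R {..<m})"
  unfolding row_map_def by (rule lin_ext_lin_hom[OF rR lmod_free_mod[OF rR] row_free_mod[OF rR b]])

lemma row_map_unit_vec:
  assumes rR: "ring R" and b: "\<And>i j. b i j \<in> carrier R"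
  shows "row_map R m b (unit_vec R i) = (\<lambda>j. if j < m then b i j else \<zero>\<^bsub>R\<^esub>)"
  unfolding row_map_def
  by (rule lin_ext_unit_vec[where S="{i}", OF rR lmod_free_mod[OF rR] _ row_free_mod[OF rR b]]) simp

lemma row_map_apply:
  fixes n :: nat
  assumes rR: "ring R" and b: "\<And>i j. b i j \<in> carrier R" and v: "v \<in> carrier (free_mod R {..<n})"
    and j: "j < m"
  shows "row_map R m b v j = finsum R (\<lambda>i. v i \<otimes>\<^bsub>R\<^esub> b i j) {..<n}"
proof -
  interpret R: ring R by fact
  interpret Fm: lmod R "free_mod R {..<m}" by (rule lmod_free_mod[OF rR])
  let ?row = "\<lambda>i j. if j < m then b i j else \<zero>\<^bsub>R\<^esub>"
  have row: "\<And>i. ?row i \<in> carrier (free_mod R {..<m})" by (rule row_free_mod[OF rR b])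
  have "row_map R m b v = finsum (free_mod R {..<m}) (\<lambda>i. v i \<odot>\<^bsub>free_mod R {..<m}\<^esub> ?row i) {..<n}"
    unfolding free_mod_lin_hom_eq_finsum[OF rR lmod_free_mod[OF rR] row_map_lin_hom[OF rR b] v]
    using free_mod_carrierD(1)[OF v] row by (intro Fm.finsum_cong') (auto simp: row_map_unit_vec[OF rR b])
  then have "row_map R m b v j = finsum (free_mod R {..<m}) (\<lambda>i. v i \<odot>\<^bsub>free_mod R {..<m}\<^esub> ?row i) {..<n} j"
    by simp
  also have "\<dots> = finsum R (\<lambda>i. (v i \<odot>\<^bsub>free_mod R {..<m}\<^esub> ?row i) j) {..<n}"
    by (rule finsum_free_mod_apply[OF rR]) (use free_mod_carrierD(1)[OF v] row in auto)
  also have "\<dots> = finsum R (\<lambda>i. v i \<otimes>\<^bsub>R\<^esub> b i j) {..<n}"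
    using j by (simp add: free_mod_simps)
  finally show ?thesis .
qed

lemma row_map_eq_zero:
  fixes n :: nat
  assumes rR: "ring R" and b: "\<And>i j. b i j \<in> carrier R" and v: "v \<in> carrier (free_mod R {..<n})"
    and syz: "\<And>j. j < m \<Longrightarrow> finsum R (\<lambda>i. v i \<otimes>\<^bsub>R\<^esub> b i j) {..<n} = \<zero>\<^bsub>R\<^esub>"
  shows "row_map R m b v = \<zero>\<^bsub>free_mod R {..<m}\<^esub>"
proof
  fix j
  have "row_map R m b v \<in> carrier (free_mod R {..<m})"
    by (rule lin_homD(1)[OF row_map_lin_hom[OF rR b] v])
  then show "row_map R m b v j = \<zero>\<^bsub>free_mod R {..<m}\<^esub> j"
    using row_map_apply[OF rR b v] syz free_mod_carrierD(2) by (cases "j < m") (auto simp: free_mod_simps)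
qed

lemma lin_hom_factor_through_row_map:
  fixes n m :: nat
  assumes rR: "ring R" and F: "lmod R F"
    and phi: "\<phi> \<in> lin_hom R (free_mod R {..<n}) F"
    and b: "\<And>i j. b i j \<in> carrier R" and y: "\<And>j. y j \<in> carrier F"
    and phi_unit: "\<And>i. i < n \<Longrightarrow> \<phi> (unit_vec R i) = finsum F (\<lambda>j. b i j \<odot>\<^bsub>F\<^esub> y j) {..<m}"
    and w: "w \<in> carrier (free_mod R {..<n})"
  shows "\<phi> w = lin_ext R F y (row_map R m b w)"
proof (rule free_mod_lin_hom_eqI[OF rR F phi lin_hom_comp[OF row_map_lin_hom[OF rR b]] _ w])
  interpret F: lmod R F by fact
  show "lin_ext R F y \<in> lin_hom R (free_mod R {..<m}) F"
    using y by (intro lin_ext_lin_hom[OF rR F])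
  fix i :: nat assume i: "i \<in> {..<n}"
  have "lin_ext R F y (row_map R m b (unit_vec R i))
      = finsum F (\<lambda>j. (if j < m then b i j else \<zero>\<^bsub>R\<^esub>) \<odot>\<^bsub>F\<^esub> y j) {..<m}"
    unfolding row_map_unit_vec[OF rR b]
    by (rule lin_ext_eq_finsum[OF F row_free_mod[OF rR b]]) (auto simp: supp_def y)
  also have "\<dots> = \<phi> (unit_vec R i)"
    unfolding phi_unit[OF i[simplified]] using b y by (intro F.finsum_cong') auto
  finally show "\<phi> (unit_vec R i) = lin_ext R F y (row_map R m b (unit_vec R i))" by simp
qed

lemma flat_factor_killing_vec:
  fixes n :: nat
  assumes rR: "ring R" and flat: "flat_module R F"
    and phi: "\<phi> \<in> lin_hom R (free_mod R {..<n}) F"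
    and v: "v \<in> carrier (free_mod R {..<n})" and pv: "\<phi> v = \<zero>\<^bsub>F\<^esub>"
  shows "\<exists>(m::nat) \<psi> \<rho>. \<psi> \<in> lin_hom R (free_mod R {..<n}) (free_mod R {..<m}) \<and> \<rho> \<in> lin_hom R (free_mod R {..<m}) F
     \<and> (\<forall>w\<in>carrier (free_mod R {..<n}). \<phi> w = \<rho> (\<psi> w)) \<and> \<psi> v = \<zero>\<^bsub>free_mod R {..<m}\<^esub>"
proof -
  interpret R: ring R by fact
  have F: "lmod R F" by (rule flat_module_lmod[OF flat])
  interpret F: lmod R F by (rule F)
  define x where "x i = (if i < n then \<phi> (unit_vec R i) else \<zero>\<^bsub>F\<^esub>)" for i
  have x: "\<And>i. x i \<in> carrier F"
    unfolding x_def using lin_homD(1)[OF phi unit_vec_carrier[OF rR]] by auto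
  have "finsum F (\<lambda>i. v i \<odot>\<^bsub>F\<^esub> x i) {..<n} = \<phi> v"
    unfolding free_mod_lin_hom_eq_finsum[OF rR F phi v]
    using free_mod_carrierD(1)[OF v] lin_homD(1)[OF phi unit_vec_carrier[OF rR]]
    by (intro F.finsum_cong') (auto simp: x_def)
  then have rel: "finsum F (\<lambda>i. v i \<odot>\<^bsub>F\<^esub> x i) {..<n} = \<zero>\<^bsub>F\<^esub>" using pv by simp
  obtain m :: nat and b y where b: "\<forall>i j. b i j \<in> carrier R" and y: "\<forall>j. y j \<in> carrier F"
    and syz: "\<forall>j<m. finsum R (\<lambda>i. v i \<otimes>\<^bsub>R\<^esub> b i j) {..<n} = \<zero>\<^bsub>R\<^esub>"
    and xb: "\<forall>k<n. x k = finsum F (\<lambda>j. b k j \<odot>\<^bsub>F\<^esub> y j) {..<m}"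
    using flat_equational_criterion[OF flat free_mod_carrierD(1)[OF v] x rel] by (elim exE conjE) (rule that)
  have phi_unit: "\<And>i. i < n \<Longrightarrow> \<phi> (unit_vec R i) = finsum F (\<lambda>j. b i j \<odot>\<^bsub>F\<^esub> y j) {..<m}"
    using xb by (simp add: x_def)
  have "\<forall>w\<in>carrier (free_mod R {..<n}). \<phi> w = lin_ext R F y (row_map R m b w)"
    using b y phi_unit by (intro ballI lin_hom_factor_through_row_map[OF rR F phi]) auto
  moreover have "row_map R m b v = \<zero>\<^bsub>free_mod R {..<m}\<^esub>"
    using b syz by (intro row_map_eq_zero[OF rR _ v]) auto
  moreover have "row_map R m b \<in> lin_hom R (free_mod R {..<n}) (free_mod R {..<m})"
    using b by (intro row_map_lin_hom[OF rR]) auto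
  moreover have "lin_ext R F y \<in> lin_hom R (free_mod R {..<m}) F"
    using y by (intro lin_ext_lin_hom[OF rR F]) auto
  ultimately show ?thesis by blast
qed

lemma flat_factor_killing_vecs:
  fixes n :: nat
  assumes rR: "ring R" and flat: "flat_module R F"
  shows "\<phi> \<in> lin_hom R (free_mod R {..<n}) F \<Longrightarrow> set vs \<subseteq> carrier (free_mod R {..<n})
   \<Longrightarrow> (\<forall>v\<in>set vs. \<phi> v = \<zero>\<^bsub>F\<^esub>)
   \<Longrightarrow> \<exists>(m::nat) \<psi> \<rho>. \<psi> \<in> lin_hom R (free_mod R {..<n}) (free_mod R {..<m}) \<and> \<rho> \<in> lin_hom R (free_mod R {..<m}) F
     \<and> (\<forall>w\<in>carrier (free_mod R {..<n}). \<phi> w = \<rho> (\<psi> w)) \<and> (\<forall>v\<in>set vs. \<psi> v = \<zero>\<^bsub>free_mod R {..<m}\<^esub>)"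
proof (induct vs arbitrary: n \<phi>)
  case Nil
  have "(\<lambda>w. w) \<in> lin_hom R (free_mod R {..<n}) (free_mod R {..<n})" by (rule lin_homI) auto
  then show ?case using Nil(1) by auto
next
  case (Cons v vs)
  obtain m0 :: nat and \<psi>0 \<rho>0 where psi0: "\<psi>0 \<in> lin_hom R (free_mod R {..<n}) (free_mod R {..<m0})"
    and rho0: "\<rho>0 \<in> lin_hom R (free_mod R {..<m0}) F"
    and c0: "\<forall>w\<in>carrier (free_mod R {..<n}). \<phi> w = \<rho>0 (\<psi>0 w)"
    and z0: "\<forall>v\<in>set vs. \<psi>0 v = \<zero>\<^bsub>free_mod R {..<m0}\<^esub>"
    using Cons(1)[OF Cons(2)] Cons(3,4) by auto
  have v: "v \<in> carrier (free_mod R {..<n})" "\<phi> v = \<zero>\<^bsub>F\<^esub>" using Cons(3,4) by auto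
  have pv: "\<psi>0 v \<in> carrier (free_mod R {..<m0})" by (rule lin_homD(1)[OF psi0 v(1)])
  have rv: "\<rho>0 (\<psi>0 v) = \<zero>\<^bsub>F\<^esub>" using c0 v by auto
  obtain m1 :: nat and \<psi>1 \<rho>1 where psi1: "\<psi>1 \<in> lin_hom R (free_mod R {..<m0}) (free_mod R {..<m1})"
    and rho1: "\<rho>1 \<in> lin_hom R (free_mod R {..<m1}) F"
    and c1: "\<forall>w\<in>carrier (free_mod R {..<m0}). \<rho>0 w = \<rho>1 (\<psi>1 w)" and z1: "\<psi>1 (\<psi>0 v) = \<zero>\<^bsub>free_mod R {..<m1}\<^esub>"
    using flat_factor_killing_vec[OF rR flat rho0 pv rv] by auto
  have zz: "\<psi>1 \<zero>\<^bsub>free_mod R {..<m0}\<^esub> = \<zero>\<^bsub>free_mod R {..<m1}\<^esub>"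
    by (rule lin_hom_zero[OF lmod_free_mod[OF rR] lmod_free_mod[OF rR] psi1])
  have "(\<lambda>w. \<psi>1 (\<psi>0 w)) \<in> lin_hom R (free_mod R {..<n}) (free_mod R {..<m1})"
    by (rule lin_hom_comp[OF psi0 psi1])
  moreover have "\<forall>w\<in>carrier (free_mod R {..<n}). \<phi> w = \<rho>1 (\<psi>1 (\<psi>0 w))"
    using c0 c1 lin_homD(1)[OF psi0] by auto
  moreover have "\<forall>v'\<in>set (v # vs). \<psi>1 (\<psi>0 v') = \<zero>\<^bsub>free_mod R {..<m1}\<^esub>"
    using z1 z0 zz by auto
  ultimately show ?case using rho1 by blast
qed

definition tuple_vec :: "'r ring \<Rightarrow> nat \<Rightarrow> 'r list \<Rightarrow> nat \<Rightarrow> 'r" where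
  "tuple_vec R n rs = (\<lambda>i. if i < n then rs ! i else \<zero>\<^bsub>R\<^esub>)"

lemma tuples_nth_closed: "rs \<in> tuples R n \<Longrightarrow> i < n \<Longrightarrow> rs ! i \<in> carrier R"
  by (auto simp: tuples_def)

lemma tuple_vec_carrier:
  assumes rR: "ring R" and rs: "rs \<in> tuples R n"
  shows "tuple_vec R n rs \<in> carrier (free_mod R {..<n})"
proof (rule free_mod_carrierI)
  interpret ring R by fact
  show "\<And>i. tuple_vec R n rs i \<in> carrier R"
    using tuples_nth_closed[OF rs] by (simp add: tuple_vec_def)
  show "finite {i. tuple_vec R n rs i \<noteq> \<zero>\<^bsub>R\<^esub>}"
    by (rule finite_subset[of _ "{..<n}"]) (auto simp: tuple_vec_def)
qed (simp add: tuple_vec_def)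

lemma lin_ext_tuple_vec:
  assumes rR: "ring R" and M: "lmod R M" and rs: "rs \<in> tuples R (length xs)"
    and xs: "set xs \<subseteq> carrier M"
  shows "lin_ext R M (\<lambda>i. xs ! i) (tuple_vec R (length xs) rs) = lincomb M rs xs"
proof -
  interpret M: lmod R M by fact
  have "lin_ext R M (\<lambda>i. xs ! i) (tuple_vec R (length xs) rs)
      = finsum M (\<lambda>i. tuple_vec R (length xs) rs i \<odot>\<^bsub>M\<^esub> xs ! i) {..<length xs}"
    by (rule lin_ext_eq_finsum[OF M tuple_vec_carrier[OF rR rs]])
       (use xs in \<open>auto simp: supp_def tuple_vec_def\<close>)
  also have "\<dots> = lincomb M rs xs"
    unfolding lincomb_def using tuples_nth_closed[OF rs] nth_mem xs
    by (intro M.finsum_cong') (auto simp: tuple_vec_def intro!: M.smult_closed)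
  finally show ?thesis .
qed

lemma lin_hom_eq_if_same_image:
  assumes A: "lmod R A" and M: "lmod R M" and B: "lmod R B"
    and pi: "\<pi> \<in> lin_hom R A M" and psi: "\<psi> \<in> lin_hom R A B"
    and ker: "\<And>w. w \<in> carrier A \<Longrightarrow> \<pi> w = \<zero>\<^bsub>M\<^esub> \<Longrightarrow> \<psi> w = \<zero>\<^bsub>B\<^esub>"
    and w: "w \<in> carrier A" "w' \<in> carrier A" and e: "\<pi> w = \<pi> w'"
  shows "\<psi> w = \<psi> w'"
proof -
  interpret A: lmod R A by fact
  interpret M: lmod R M by fact
  interpret B: lmod R B by fact
  have "\<pi> (w \<ominus>\<^bsub>A\<^esub> w') = \<zero>\<^bsub>M\<^esub>"
    using lin_hom_diff[OF A M pi w] e lin_homD(1)[OF pi w(2)] by (simp add: M.r_neg M.minus_eq)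
  then have "\<psi> (w \<ominus>\<^bsub>A\<^esub> w') = \<zero>\<^bsub>B\<^esub>" using ker w by simp
  then have "\<psi> w \<ominus>\<^bsub>B\<^esub> \<psi> w' = \<zero>\<^bsub>B\<^esub>" using lin_hom_diff[OF A B psi w] by simp
  then show ?thesis
    using lin_homD(1)[OF psi w(1)] lin_homD(1)[OF psi w(2)]
    by (metis B.add.inv_closed B.add.inv_equality B.minus_eq B.minus_minus)
qed

lemma lin_hom_factor_through_surj:
  assumes A: "lmod R A" and M: "lmod R M" and B: "lmod R B"
    and pi: "\<pi> \<in> lin_hom R A M" and surj: "\<And>x. x \<in> carrier M \<Longrightarrow> \<exists>w\<in>carrier A. \<pi> w = x"
    and psi: "\<psi> \<in> lin_hom R A B"
    and ker: "\<And>w. w \<in> carrier A \<Longrightarrow> \<pi> w = \<zero>\<^bsub>M\<^esub> \<Longrightarrow> \<psi> w = \<zero>\<^bsub>B\<^esub>"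
  shows "\<exists>\<beta>\<in>lin_hom R M B. \<forall>w\<in>carrier A. \<psi> w = \<beta> (\<pi> w)"
proof -
  interpret A: lmod R A by fact
  interpret M: lmod R M by fact
  interpret B: lmod R B by fact
  note well_def = lin_hom_eq_if_same_image[OF A M B pi psi ker]
  define sec where "sec x = (SOME w. w \<in> carrier A \<and> \<pi> w = x)" for x
  have sec: "sec x \<in> carrier A \<and> \<pi> (sec x) = x" if "x \<in> carrier M" for x
    unfolding sec_def using someI_ex[OF surj[OF that, unfolded Bex_def]] .
  define \<beta> where "\<beta> x = \<psi> (sec x)" for x
  have "\<beta> \<in> lin_hom R M B"
  proof (rule lin_homI)
    show "\<beta> x \<in> carrier B" if "x \<in> carrier M" for x
      using sec[OF that] lin_homD(1)[OF psi] by (simp add: \<beta>_def)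
  next
    fix x y assume x: "x \<in> carrier M" and y: "y \<in> carrier M"
    have "\<pi> (sec x \<oplus>\<^bsub>A\<^esub> sec y) = x \<oplus>\<^bsub>M\<^esub> y" using lin_homD(2)[OF pi] sec x y by simp
    then have "\<psi> (sec (x \<oplus>\<^bsub>M\<^esub> y)) = \<psi> (sec x \<oplus>\<^bsub>A\<^esub> sec y)"
      using sec[of "x \<oplus>\<^bsub>M\<^esub> y"] sec[OF x] sec[OF y] x y by (intro well_def) auto
    then show "\<beta> (x \<oplus>\<^bsub>M\<^esub> y) = \<beta> x \<oplus>\<^bsub>B\<^esub> \<beta> y"
      using lin_homD(2)[OF psi] sec[OF x] sec[OF y] by (simp add: \<beta>_def)
  next
    fix r x assume r: "r \<in> carrier R" and x: "x \<in> carrier M"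
    have "\<pi> (r \<odot>\<^bsub>A\<^esub> sec x) = r \<odot>\<^bsub>M\<^esub> x" using lin_homD(3)[OF pi] sec x r by simp
    then have "\<psi> (sec (r \<odot>\<^bsub>M\<^esub> x)) = \<psi> (r \<odot>\<^bsub>A\<^esub> sec x)"
      using sec[of "r \<odot>\<^bsub>M\<^esub> x"] sec[OF x] x r by (intro well_def) auto
    then show "\<beta> (r \<odot>\<^bsub>M\<^esub> x) = r \<odot>\<^bsub>B\<^esub> \<beta> x"
      using lin_homD(3)[OF psi] sec[OF x] r by (simp add: \<beta>_def)
  qed
  moreover have "\<psi> w = \<beta> (\<pi> w)" if w: "w \<in> carrier A" for w
    using sec[OF lin_homD(1)[OF pi w]] w unfolding \<beta>_def by (intro well_def) auto
  ultimately show ?thesis by blast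
qed

locale presentation = lmod R M for R (structure) and M +
  fixes xs :: "'b list" and rels :: "'a list list"
  assumes gens: "set xs \<subseteq> carrier M"
    and spans: "\<forall>x\<in>carrier M. \<exists>rs\<in>tuples R (length xs). x = lincomb M rs xs"
    and rels: "set rels \<subseteq> tuples R (length xs)"
    and kernel: "\<forall>rs\<in>tuples R (length xs). lincomb M rs xs = \<zero>\<^bsub>M\<^esub> \<longleftrightarrow>
      (\<exists>cs\<in>tuples R (length rels).
         \<forall>i<length xs. rs ! i = finsum R (\<lambda>j. cs ! j \<otimes> (rels ! j ! i)) {..<length rels})"
begin

abbreviation (input) Fn :: "('a, nat \<Rightarrow> 'a) module" where
  "Fn \<equiv> free_mod R {..<length xs}"

definition pres_map :: "(nat \<Rightarrow> 'a) \<Rightarrow> 'b" where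
  "pres_map = lin_ext R M (\<lambda>i. xs ! i)"

definition rel_vec :: "nat \<Rightarrow> nat \<Rightarrow> 'a" where
  "rel_vec j = tuple_vec R (length xs) (rels ! j)"

lemma rels_nth: "j < length rels \<Longrightarrow> rels ! j \<in> tuples R (length xs)"
  using rels by auto

lemma rel_vec_carrier: "j < length rels \<Longrightarrow> rel_vec j \<in> carrier Fn"
  unfolding rel_vec_def by (rule tuple_vec_carrier[OF R.ring_axioms rels_nth])

lemma pres_map_lin_hom: "pres_map \<in> lin_hom R Fn M"
  unfolding pres_map_def using gens by (intro lin_ext_lin_hom[OF R.ring_axioms lmod_axioms]) auto

lemma pres_map_tuple_vec: "rs \<in> tuples R (length xs) \<Longrightarrow> pres_map (tuple_vec R (length xs) rs) = lincomb M rs xs"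
  unfolding pres_map_def by (rule lin_ext_tuple_vec[OF R.ring_axioms lmod_axioms _ gens])

lemma pres_map_surj:
  assumes "x \<in> carrier M"
  shows "\<exists>w\<in>carrier Fn. pres_map w = x"
proof -
  obtain rs where "rs \<in> tuples R (length xs)" "x = lincomb M rs xs" using spans assms by blast
  then show ?thesis using tuple_vec_carrier[OF R.ring_axioms] pres_map_tuple_vec by metis
qed

lemma kernel_iff:
  "rs \<in> tuples R (length xs) \<Longrightarrow> lincomb M rs xs = \<zero>\<^bsub>M\<^esub> \<longleftrightarrow>
    (\<exists>cs\<in>tuples R (length rels).
       \<forall>i<length xs. rs ! i = finsum R (\<lambda>j. cs ! j \<otimes> (rels ! j ! i)) {..<length rels})"
  using kernel by (rule bspec)

lemma pres_map_rel_vec: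
  assumes j: "j < length rels"
  shows "pres_map (rel_vec j) = \<zero>\<^bsub>M\<^esub>"
proof -
  define cs where "cs = map (\<lambda>k. if k = j then \<one> else \<zero>) [0..<length rels]"
  have cs: "cs \<in> tuples R (length rels)" by (auto simp: cs_def tuples_def)
  have "rels ! j ! i = finsum R (\<lambda>k. cs ! k \<otimes> (rels ! k ! i)) {..<length rels}"
    if i: "i < length xs" for i
  proof -
    have rki: "\<And>k. k < length rels \<Longrightarrow> rels ! k ! i \<in> carrier R"
      using tuples_nth_closed[OF rels_nth i] .
    have "finsum R (\<lambda>k. cs ! k \<otimes> (rels ! k ! i)) {..<length rels}
        = finsum R (\<lambda>k. if j = k then rels ! k ! i else \<zero>) {..<length rels}"
      by (intro R.finsum_cong') (auto simp: cs_def rki)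
    also have "\<dots> = rels ! j ! i" using j rki by (subst R.add.finprod_singleton) auto
    finally show ?thesis by simp
  qed
  then have "lincomb M (rels ! j) xs = \<zero>\<^bsub>M\<^esub>"
    using kernel_iff[OF rels_nth[OF j]] cs by blast
  then show ?thesis unfolding rel_vec_def using pres_map_tuple_vec[OF rels_nth[OF j]] by simp
qed

lemma kernel_in_rel_span:
  assumes w: "w \<in> carrier Fn" and pw: "pres_map w = \<zero>\<^bsub>M\<^esub>"
  shows "\<exists>cs\<in>tuples R (length rels).
    w = finsum Fn (\<lambda>j. cs ! j \<odot>\<^bsub>Fn\<^esub> rel_vec j) {..<length rels}"
proof -
  define rs where "rs = map w [0..<length xs]"
  have rs: "rs \<in> tuples R (length xs)" using free_mod_carrierD(1)[OF w] by (auto simp: rs_def tuples_def)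
  have w_rs: "tuple_vec R (length xs) rs = w"
    using free_mod_carrierD(2)[OF w] by (auto simp: tuple_vec_def rs_def)
  have "lincomb M rs xs = \<zero>\<^bsub>M\<^esub>" using pres_map_tuple_vec[OF rs] w_rs pw by simp
  then obtain cs where cs: "cs \<in> tuples R (length rels)"
    and rs_cs: "\<forall>i<length xs. rs ! i = finsum R (\<lambda>j. cs ! j \<otimes> (rels ! j ! i)) {..<length rels}"
    using kernel_iff[OF rs] by blast
  interpret F: lmod R Fn by (rule lmod_free_mod[OF R.ring_axioms])
  have f: "(\<lambda>j. cs ! j \<odot>\<^bsub>Fn\<^esub> rel_vec j) \<in> {..<length rels} \<rightarrow> carrier Fn"
    using tuples_nth_closed[OF cs] rel_vec_carrier by auto
  have "w = finsum Fn (\<lambda>j. cs ! j \<odot>\<^bsub>Fn\<^esub> rel_vec j) {..<length rels}"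
  proof
    fix i
    have "finsum Fn (\<lambda>j. cs ! j \<odot>\<^bsub>Fn\<^esub> rel_vec j) {..<length rels} i
        = finsum R (\<lambda>j. cs ! j \<otimes> rel_vec j i) {..<length rels}"
      by (subst finsum_free_mod_apply[OF R.ring_axioms f]) (simp add: free_mod_simps)
    also have "\<dots> = w i"
    proof (cases "i < length xs")
      case True
      then show ?thesis using rs_cs by (simp add: rel_vec_def tuple_vec_def rs_def)
    next
      case False
      then have "finsum R (\<lambda>j. cs ! j \<otimes> rel_vec j i) {..<length rels} = finsum R (\<lambda>j. \<zero>) {..<length rels}"
        using tuples_nth_closed[OF cs] by (intro R.finsum_cong') (auto simp: rel_vec_def tuple_vec_def)
      then show ?thesis using False free_mod_carrierD(2)[OF w, of i] by simp
    qed
    finally show "w i = finsum Fn (\<lambda>j. cs ! j \<odot>\<^bsub>Fn\<^esub> rel_vec j) {..<length rels} i" by simp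
  qed
  then show ?thesis using cs by blast
qed

lemma kernel_vanishing:
  assumes X: "lmod R X" and psi: "\<psi> \<in> lin_hom R Fn X"
    and psi_rel: "\<And>j. j < length rels \<Longrightarrow> \<psi> (rel_vec j) = \<zero>\<^bsub>X\<^esub>"
    and w: "w \<in> carrier Fn" and pw: "pres_map w = \<zero>\<^bsub>M\<^esub>"
  shows "\<psi> w = \<zero>\<^bsub>X\<^esub>"
proof -
  interpret X: lmod R X by fact
  have F: "lmod R Fn" by (rule lmod_free_mod[OF R.ring_axioms])
  interpret F: lmod R Fn by (rule F)
  obtain cs where cs: "cs \<in> tuples R (length rels)"
    and w_cs: "w = finsum Fn (\<lambda>j. cs ! j \<odot>\<^bsub>Fn\<^esub> rel_vec j) {..<length rels}"
    using kernel_in_rel_span[OF w pw] by blast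
  have "\<psi> w = finsum X (\<lambda>j. \<psi> (cs ! j \<odot>\<^bsub>Fn\<^esub> rel_vec j)) {..<length rels}"
    unfolding w_cs using tuples_nth_closed[OF cs] rel_vec_carrier
    by (intro lin_hom_finsum[OF F X psi]) auto
  also have "\<dots> = finsum X (\<lambda>j. \<zero>\<^bsub>X\<^esub>) {..<length rels}"
    using tuples_nth_closed[OF cs] rel_vec_carrier psi_rel
    by (intro X.finsum_cong') (auto simp: lin_homD(3)[OF psi])
  finally show ?thesis by simp
qed

end

lemma fin_presented_presentation:
  assumes "lmod R M" and "fin_presented R M"
  obtains xs rels where "presentation R M xs rels"
  using assms unfolding fin_presented_def
  by (elim exE conjE) (rule that, unfold presentation_def presentation_axioms_def, intro conjI, assumption+)

theorem fin_presented_to_flat_factors_through_free: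
  assumes rR: "ring R" and M: "lmod R M" and fp: "fin_presented R M"
    and flat: "flat_module R Z" and g: "\<gamma> \<in> lin_hom R M Z"
  shows "\<exists>(m::nat) \<beta> \<rho>. \<beta> \<in> lin_hom R M (free_mod R {..<m}) \<and> \<rho> \<in> lin_hom R (free_mod R {..<m}) Z
     \<and> (\<forall>x\<in>carrier M. \<gamma> x = \<rho> (\<beta> x))"
proof -
  obtain xs rels where "presentation R M xs rels" using fin_presented_presentation[OF M fp] .
  then interpret presentation R M xs rels .
  have Z: "lmod R Z" by (rule flat_module_lmod[OF flat])
  let ?vs = "map rel_vec [0..<length rels]"
  have "(\<lambda>w. \<gamma> (pres_map w)) \<in> lin_hom R Fn Z" by (rule lin_hom_comp[OF pres_map_lin_hom g])
  moreover have "set ?vs \<subseteq> carrier Fn" using rel_vec_carrier by auto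
  moreover have "\<forall>v\<in>set ?vs. \<gamma> (pres_map v) = \<zero>\<^bsub>Z\<^esub>"
    using pres_map_rel_vec lin_hom_zero[OF M Z g] by auto
  ultimately have "\<exists>(m::nat) \<psi> \<rho>. \<psi> \<in> lin_hom R Fn (free_mod R {..<m}) \<and> \<rho> \<in> lin_hom R (free_mod R {..<m}) Z
     \<and> (\<forall>w\<in>carrier Fn. \<gamma> (pres_map w) = \<rho> (\<psi> w)) \<and> (\<forall>v\<in>set ?vs. \<psi> v = \<zero>\<^bsub>free_mod R {..<m}\<^esub>)"
    by (rule flat_factor_killing_vecs[OF rR flat])
  then obtain m :: nat and \<psi> \<rho> where psi: "\<psi> \<in> lin_hom R Fn (free_mod R {..<m})"
    and rho: "\<rho> \<in> lin_hom R (free_mod R {..<m}) Z"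
    and fac: "\<forall>w\<in>carrier Fn. \<gamma> (pres_map w) = \<rho> (\<psi> w)"
    and kill: "\<forall>v\<in>set ?vs. \<psi> v = \<zero>\<^bsub>free_mod R {..<m}\<^esub>"
    by blast
  have "\<And>j. j < length rels \<Longrightarrow> \<psi> (rel_vec j) = \<zero>\<^bsub>free_mod R {..<m}\<^esub>"
    using kill by simp
  then have "\<And>w. w \<in> carrier Fn \<Longrightarrow> pres_map w = \<zero>\<^bsub>M\<^esub> \<Longrightarrow> \<psi> w = \<zero>\<^bsub>free_mod R {..<m}\<^esub>"
    by (rule kernel_vanishing[OF lmod_free_mod[OF rR] psi])
  then obtain \<beta> where beta: "\<beta> \<in> lin_hom R M (free_mod R {..<m})"
    and psi_beta: "\<forall>w\<in>carrier Fn. \<psi> w = \<beta> (pres_map w)"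
    using lin_hom_factor_through_surj[OF lmod_free_mod[OF rR] M lmod_free_mod[OF rR] pres_map_lin_hom
        pres_map_surj psi] by blast
  have "\<gamma> x = \<rho> (\<beta> x)" if x: "x \<in> carrier M" for x
  proof -
    obtain w where w: "w \<in> carrier Fn" and x_w: "pres_map w = x" using pres_map_surj[OF x] by blast
    have "\<gamma> x = \<rho> (\<psi> w)" using fac w x_w by blast
    also have "\<dots> = \<rho> (\<beta> x)" using psi_beta w x_w by metis
    finally show ?thesis .
  qed
  then show ?thesis using beta rho by blast
qed


section \<open>Complexes\<close>

lemma cx_lmod: "is_complex R C d \<Longrightarrow> lmod R (C n)"
  by (simp add: is_complex_def left_module_lmod)

lemma cx_ring: "is_complex R C d \<Longrightarrow> ring R"
  using cx_lmod lmod_def by blast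

lemma cx_d: "is_complex R C d \<Longrightarrow> d n \<in> lin_hom R (C n) (C (n - 1))"
  by (simp add: is_complex_def)

lemma cx_d_closed:
  assumes "is_complex R C d" and "x \<in> carrier (C (n + 1))"
  shows "d (n + 1) x \<in> carrier (C n)"
  using lin_homD(1)[OF cx_d[OF assms(1), of "n + 1"] assms(2)] by simp

lemma cx_d_zero:
  assumes "is_complex R C d"
  shows "d (n + 1) \<zero>\<^bsub>C (n + 1)\<^esub> = \<zero>\<^bsub>C n\<^esub>"
  using lin_hom_zero[OF cx_lmod[OF assms] cx_lmod[OF assms] cx_d[OF assms, of "n + 1"]] by simp

lemma cx_dd: "is_complex R C d \<Longrightarrow> x \<in> carrier (C (n + 1)) \<Longrightarrow> d n (d (n + 1) x) = \<zero>\<^bsub>C (n - 1)\<^esub>"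
  unfolding is_complex_def by (drule conjunct2, drule conjunct2, drule spec[of _ "n + 1"]) simp

lemma cx_dd': "is_complex R C d \<Longrightarrow> x \<in> carrier (C n) \<Longrightarrow> d (n - 1) (d n x) = \<zero>\<^bsub>C (n - 2)\<^esub>"
  unfolding is_complex_def by blast

lemma cxm_lin: "cx_morphism R C dC D dD f \<Longrightarrow> f n \<in> lin_hom R (C n) (D n)"
  by (simp add: cx_morphism_def)

lemma cxm_comm: "cx_morphism R C dC D dD f \<Longrightarrow> x \<in> carrier (C n) \<Longrightarrow> dD n (f n x) = f (n - 1) (dC n x)"
  by (simp add: cx_morphism_def)

lemma flat_complex_is_complex: "flat_complex R N dN \<Longrightarrow> is_complex R N dN"
  by (simp add: flat_complex_def exact_complex_def)

lemma lin_hom_cycles: "h \<in> lin_hom R X (cycles N d n) \<Longrightarrow> h \<in> lin_hom R X (N n)"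
  unfolding lin_hom_def cycles_def by auto

lemma lin_hom_to_cycles:
  assumes "h \<in> lin_hom R X (N n)" and "\<And>x. x \<in> carrier X \<Longrightarrow> d n (h x) = \<zero>\<^bsub>N (n - 1)\<^esub>"
  shows "h \<in> lin_hom R X (cycles N d n)"
  using assms unfolding lin_hom_def cycles_def by auto


section \<open>The disc complex\<close>

text \<open>The generators of degree n are (True, y) for y in N n and (False, y) for y in N (n + 1);
  d sends (True, y) to (False, y) one degree lower, so the complex is a sum of discs.\<close>

definition disc_basis :: "(int \<Rightarrow> ('r, 'n) module) \<Rightarrow> int \<Rightarrow> (bool \<times> 'n) set" where
  "disc_basis N n = {True} \<times> carrier (N n) \<union> {False} \<times> carrier (N (n + 1))"

definition disc_cx :: "'r ring \<Rightarrow> (int \<Rightarrow> ('r, 'n) module) \<Rightarrow> int \<Rightarrow> ('r, bool \<times> 'n \<Rightarrow> 'r) module" where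
  "disc_cx R N n = free_mod R (disc_basis N n)"

definition disc_d :: "'r ring \<Rightarrow> int \<Rightarrow> (bool \<times> 'n \<Rightarrow> 'r) \<Rightarrow> (bool \<times> 'n \<Rightarrow> 'r)" where
  "disc_d R n w = (\<lambda>p. if fst p then \<zero>\<^bsub>R\<^esub> else w (True, snd p))"

lemma disc_d_unit_vec_True: "disc_d R n (unit_vec R (True, y)) = unit_vec R (False, y)"
  by (auto simp: disc_d_def unit_vec_def)

lemma disc_d_unit_vec_False: "disc_d R n (unit_vec R (False, y)) = (\<lambda>_. \<zero>\<^bsub>R\<^esub>)"
  by (auto simp: disc_d_def unit_vec_def)

lemma lmod_disc_cx: "ring R \<Longrightarrow> lmod R (disc_cx R N n)"
  unfolding disc_cx_def by (rule lmod_free_mod)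

lemma zero_disc_cx: "\<zero>\<^bsub>disc_cx R N n\<^esub> = (\<lambda>_. \<zero>\<^bsub>R\<^esub>)"
  by (simp add: disc_cx_def free_mod_simps)

lemma unit_vec_disc_cx_True: "ring R \<Longrightarrow> y \<in> carrier (N n) \<Longrightarrow> unit_vec R (True, y) \<in> carrier (disc_cx R N n)"
  unfolding disc_cx_def by (rule unit_vec_carrier) (auto simp: disc_basis_def)

lemma disc_d_lin_hom:
  fixes R (structure)
  assumes rR: "ring R"
  shows "disc_d R n \<in> lin_hom R (disc_cx R N n) (disc_cx R N (n - 1))"
proof -
  interpret ring R by fact
  show ?thesis
  proof (rule lin_homI)
    fix w assume "w \<in> carrier (disc_cx R N n)"
    then have w: "w \<in> carrier (free_mod R (disc_basis N n))" by (simp add: disc_cx_def)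
    have "{p. disc_d R n w p \<noteq> \<zero>} \<subseteq> (\<lambda>p. (False, snd p)) ` {p. w p \<noteq> \<zero>}"
    proof
      fix p assume "p \<in> {p. disc_d R n w p \<noteq> \<zero>}"
      then have "\<not> fst p" "w (True, snd p) \<noteq> \<zero>" by (auto simp: disc_d_def split: if_splits)
      then show "p \<in> (\<lambda>p. (False, snd p)) ` {p. w p \<noteq> \<zero>}"
        by (intro image_eqI[of _ _ "(True, snd p)"]) (auto intro: prod_eqI)
    qed
    then have "finite {p. disc_d R n w p \<noteq> \<zero>}"
      using free_mod_carrierD(3)[OF w] by (meson finite_imageI finite_subset)
    moreover have "disc_d R n w p = \<zero>" if "p \<notin> disc_basis N (n - 1)" for p
      using that free_mod_carrierD(2)[OF w, of "(True, snd p)"]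
      by (cases p) (auto simp: disc_d_def disc_basis_def)
    ultimately show "disc_d R n w \<in> carrier (disc_cx R N (n - 1))"
      unfolding disc_cx_def using free_mod_carrierD(1)[OF w]
      by (intro free_mod_carrierI) (auto simp: disc_d_def)
  next
    fix v w
    show "disc_d R n (v \<oplus>\<^bsub>disc_cx R N n\<^esub> w) = disc_d R n v \<oplus>\<^bsub>disc_cx R N (n - 1)\<^esub> disc_d R n w"
      by (auto simp: disc_cx_def free_mod_simps disc_d_def)
  next
    fix r w assume "r \<in> carrier R"
    then show "disc_d R n (r \<odot>\<^bsub>disc_cx R N n\<^esub> w) = r \<odot>\<^bsub>disc_cx R N (n - 1)\<^esub> disc_d R n w"
      by (auto simp: disc_cx_def free_mod_simps disc_d_def)
  qed
qed

lemma disc_cx_is_complex: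
  assumes "ring R"
  shows "is_complex R (disc_cx R N) (disc_d R)"
  unfolding is_complex_def
  using lmod_left_module[OF lmod_disc_cx[OF assms]] disc_d_lin_hom[OF assms]
  by (auto simp: disc_d_def zero_disc_cx)

lemma disc_cx_lin_hom_eqI:
  assumes rR: "ring R" and X: "lmod R X"
    and phi: "\<phi> \<in> lin_hom R (disc_cx R N n) X" and psi: "\<psi> \<in> lin_hom R (disc_cx R N n) X"
    and T: "\<And>y. y \<in> carrier (N n) \<Longrightarrow> \<phi> (unit_vec R (True, y)) = \<psi> (unit_vec R (True, y))"
    and F: "\<And>y. y \<in> carrier (N (n + 1)) \<Longrightarrow> \<phi> (unit_vec R (False, y)) = \<psi> (unit_vec R (False, y))"
    and w: "w \<in> carrier (disc_cx R N n)"
  shows "\<phi> w = \<psi> w"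
proof (rule free_mod_lin_hom_eqI[where S="disc_basis N n", OF rR X])
  show "\<phi> \<in> lin_hom R (free_mod R (disc_basis N n)) X" "\<psi> \<in> lin_hom R (free_mod R (disc_basis N n)) X"
    "w \<in> carrier (free_mod R (disc_basis N n))"
    using phi psi w by (simp_all add: disc_cx_def)
  fix p assume "p \<in> disc_basis N n"
  then show "\<phi> (unit_vec R p) = \<psi> (unit_vec R p)"
    using T F by (auto simp: disc_basis_def)
qed

text \<open>The generators (True, y) may be sent anywhere, to L n y; being a chain map then forces
  the images of the generators (False, y).\<close>

definition disc_ext :: "'r ring \<Rightarrow> (int \<Rightarrow> ('r, 'x) module) \<Rightarrow> (int \<Rightarrow> 'x \<Rightarrow> 'x)
    \<Rightarrow> (int \<Rightarrow> 'n \<Rightarrow> 'x) \<Rightarrow> int \<Rightarrow> (bool \<times> 'n \<Rightarrow> 'r) \<Rightarrow> 'x" where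
  "disc_ext R X dX L n = lin_ext R (X n) (\<lambda>p. if fst p then L n (snd p) else dX (n + 1) (L (n + 1) (snd p)))"

context
  fixes R :: "'r ring" and N :: "int \<Rightarrow> ('r, 'n) module" and X dX L
  assumes X: "is_complex R X dX" and L: "\<And>n y. y \<in> carrier (N n) \<Longrightarrow> L n y \<in> carrier (X n)"
begin

lemma disc_ext_generators:
  "p \<in> disc_basis N n \<Longrightarrow> (if fst p then L n (snd p) else dX (n + 1) (L (n + 1) (snd p))) \<in> carrier (X n)"
  using L cx_d_closed[OF X] by (auto simp: disc_basis_def)

lemma disc_ext_lin_hom: "disc_ext R X dX L n \<in> lin_hom R (disc_cx R N n) (X n)"
  unfolding disc_ext_def disc_cx_def
  by (rule lin_ext_lin_hom[OF cx_ring[OF X] cx_lmod[OF X] disc_ext_generators])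

lemma disc_ext_unit_vec:
  assumes p: "p \<in> disc_basis N n"
  shows "disc_ext R X dX L n (unit_vec R p) = (if fst p then L n (snd p) else dX (n + 1) (L (n + 1) (snd p)))"
  unfolding disc_ext_def
  using disc_ext_generators[OF p]
  by (rule lin_ext_unit_vec[where L="\<lambda>p. if fst p then L n (snd p) else dX (n + 1) (L (n + 1) (snd p))",
        OF cx_ring[OF X] cx_lmod[OF X] p])

lemma disc_ext_True: "y \<in> carrier (N n) \<Longrightarrow> disc_ext R X dX L n (unit_vec R (True, y)) = L n y"
  using disc_ext_unit_vec[of "(True, y)"] by (simp add: disc_basis_def)

lemma disc_ext_False:
  "y \<in> carrier (N (n + 1)) \<Longrightarrow> disc_ext R X dX L n (unit_vec R (False, y)) = dX (n + 1) (L (n + 1) y)"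
  using disc_ext_unit_vec[of "(False, y)"] by (simp add: disc_basis_def)

lemma disc_ext_cx_morphism: "cx_morphism R (disc_cx R N) (disc_d R) X dX (disc_ext R X dX L)"
  unfolding cx_morphism_def
proof (intro allI conjI ballI disc_ext_lin_hom)
  fix n w assume w: "w \<in> carrier (disc_cx R N n)"
  have rR: "ring R" by (rule cx_ring[OF X])
  show "dX n (disc_ext R X dX L n w) = disc_ext R X dX L (n - 1) (disc_d R n w)"
  proof (rule disc_cx_lin_hom_eqI[OF rR cx_lmod[OF X] lin_hom_comp[OF disc_ext_lin_hom cx_d[OF X]]
        lin_hom_comp[OF disc_d_lin_hom[OF rR] disc_ext_lin_hom] _ _ w])
    fix y assume "y \<in> carrier (N n)"
    then show "dX n (disc_ext R X dX L n (unit_vec R (True, y)))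
        = disc_ext R X dX L (n - 1) (disc_d R n (unit_vec R (True, y)))"
      using disc_ext_True disc_ext_False[of y "n - 1"] by (simp add: disc_d_unit_vec_True)
  next
    fix y assume "y \<in> carrier (N (n + 1))"
    then show "dX n (disc_ext R X dX L n (unit_vec R (False, y)))
        = disc_ext R X dX L (n - 1) (disc_d R n (unit_vec R (False, y)))"
      using disc_ext_False cx_dd[OF X L] lin_hom_zero[OF lmod_disc_cx[OF rR] cx_lmod[OF X] disc_ext_lin_hom]
      by (simp add: disc_d_unit_vec_False zero_disc_cx)
  qed
qed

end

lemma disc_cx_lift:
  assumes X: "is_complex R X dX" and Y: "is_complex R Y dY"
    and g: "cx_morphism R X dX Y dY g" and surj: "\<forall>n. g n ` carrier (X n) = carrier (Y n)"
    and h: "cx_morphism R (disc_cx R N) (disc_d R) Y dY h"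
  shows "\<exists>k. cx_morphism R (disc_cx R N) (disc_d R) X dX k \<and> (\<forall>n. \<forall>x\<in>carrier (disc_cx R N n). g n (k n x) = h n x)"
proof -
  have rR: "ring R" by (rule cx_ring[OF X])
  have "\<forall>n y. \<exists>\<xi>. y \<in> carrier (N n) \<longrightarrow> \<xi> \<in> carrier (X n) \<and> g n \<xi> = h n (unit_vec R (True, y))"
    using lin_homD(1)[OF cxm_lin[OF h] unit_vec_disc_cx_True[where N=N, OF rR]] surj by (metis imageE)
  then obtain L where L: "\<And>n y. y \<in> carrier (N n) \<Longrightarrow> L n y \<in> carrier (X n)"
    and gL: "\<And>n y. y \<in> carrier (N n) \<Longrightarrow> g n (L n y) = h n (unit_vec R (True, y))"
    by metis
  have "g n (disc_ext R X dX L n w) = h n w" if w: "w \<in> carrier (disc_cx R N n)" for n w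
  proof (rule disc_cx_lin_hom_eqI[OF rR cx_lmod[OF Y]
        lin_hom_comp[OF disc_ext_lin_hom[where N=N and L=L, OF X L] cxm_lin[OF g]] cxm_lin[OF h] _ _ w])
    fix y assume y: "y \<in> carrier (N n)"
    have "disc_ext R X dX L n (unit_vec R (True, y)) = L n y"
      by (rule disc_ext_True[where N=N and L=L, OF X L y])
    then show "g n (disc_ext R X dX L n (unit_vec R (True, y))) = h n (unit_vec R (True, y))"
      using gL[OF y] by simp
  next
    fix y assume y: "y \<in> carrier (N (n + 1))"
    have "g n (dX (n + 1) (L (n + 1) y)) = dY (n + 1) (h (n + 1) (unit_vec R (True, y)))"
      using cxm_comm[OF g L[OF y]] gL[OF y] by simp
    also have "\<dots> = h n (unit_vec R (False, y))"
      using cxm_comm[OF h unit_vec_disc_cx_True[where N=N, OF rR y]] by (simp add: disc_d_unit_vec_True)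
    moreover have "disc_ext R X dX L n (unit_vec R (False, y)) = dX (n + 1) (L (n + 1) y)"
      by (rule disc_ext_False[where N=N and L=L, OF X L y])
    ultimately show "g n (disc_ext R X dX L n (unit_vec R (False, y))) = h n (unit_vec R (False, y))"
      by simp
  qed
  then show ?thesis
    using disc_ext_cx_morphism[where N=N and L=L, OF X L] by (intro exI[of _ "disc_ext R X dX L"]) auto
qed

lemma disc_cx_projective:
  assumes "ring R"
  shows "projective_complex R (disc_cx R N) (disc_d R)"
  unfolding projective_complex_def
proof (intro conjI allI impI disc_cx_is_complex[OF assms])
  fix X :: "int \<Rightarrow> ('a, bool \<times> (bool \<times> 'b \<Rightarrow> 'a) \<Rightarrow> 'a) module" and dX Y dY g h
  assume "is_complex R X dX \<and> is_complex R Y dY \<and> cx_morphism R X dX Y dY g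
    \<and> (\<forall>n. g n ` carrier (X n) = carrier (Y n)) \<and> cx_morphism R (disc_cx R N) (disc_d R) Y dY h"
  then show "\<exists>k. cx_morphism R (disc_cx R N) (disc_d R) X dX k \<and> (\<forall>n. \<forall>x\<in>carrier (disc_cx R N n). g n (k n x) = h n x)"
    by (elim conjE) (rule disc_cx_lift)
qed

section \<open>Factoring a chain map through the disc complex\<close>

definition free_augm :: "'r ring \<Rightarrow> ('r, 'm) module \<Rightarrow> ('m \<Rightarrow> 'r) \<Rightarrow> 'm" where
  "free_augm R X = lin_ext R X (\<lambda>y. y)"

lemma lmod_ring: "lmod R X \<Longrightarrow> ring R"
  by (simp add: lmod_def)

lemma free_augm_lin_hom:
  assumes X: "lmod R X"
  shows "free_augm R X \<in> lin_hom R (free_mod R (carrier X)) X"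
  unfolding free_augm_def by (rule lin_ext_lin_hom[OF lmod_ring[OF X] X]) simp

lemma free_augm_unit_vec:
  assumes X: "lmod R X" and y: "y \<in> carrier X"
  shows "free_augm R X (unit_vec R y) = y"
  unfolding free_augm_def using lin_ext_unit_vec[where L="\<lambda>y. y", OF lmod_ring[OF X] X y y] by simp

lemma free_augm_zero:
  assumes X: "lmod R X"
  shows "free_augm R X (\<lambda>_. \<zero>\<^bsub>R\<^esub>) = \<zero>\<^bsub>X\<^esub>"
  using lin_hom_zero[OF lmod_free_mod[OF lmod_ring[OF X]] X free_augm_lin_hom[OF X]]
  by (simp add: free_mod_simps)

lemma lin_hom_lift_to_free:
  assumes rR: "ring R" and Y: "lmod R Y" and Z: "lmod R Z" and d: "d \<in> lin_hom R Y Z"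
    and rho: "\<rho> \<in> lin_hom R (free_mod R S) Z"
    and im: "\<And>j. j \<in> S \<Longrightarrow> \<rho> (unit_vec R j) \<in> d ` carrier Y"
  shows "\<exists>E\<in>lin_hom R (free_mod R S) (free_mod R (carrier Y)).
    \<forall>u\<in>carrier (free_mod R S). d (free_augm R Y (E u)) = \<rho> u"
proof -
  have "\<exists>y. y \<in> carrier Y \<and> d y = \<rho> (unit_vec R j)" if j: "j \<in> S" for j
  proof -
    obtain y where "\<rho> (unit_vec R j) = d y" "y \<in> carrier Y" using im[OF j] by (rule imageE)
    then show ?thesis by auto
  qed
  then obtain w where w: "\<And>j. j \<in> S \<Longrightarrow> w j \<in> carrier Y \<and> d (w j) = \<rho> (unit_vec R j)"
    using bchoice[of S "\<lambda>j y. y \<in> carrier Y \<and> d y = \<rho> (unit_vec R j)"] by blast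
  define E where "E = lin_ext R (free_mod R (carrier Y)) (\<lambda>j. unit_vec R (w j))"
  have E: "E \<in> lin_hom R (free_mod R S) (free_mod R (carrier Y))"
    unfolding E_def using w by (intro lin_ext_lin_hom[OF rR lmod_free_mod[OF rR]] unit_vec_carrier[OF rR]) auto
  have "d (free_augm R Y (E u)) = \<rho> u" if u: "u \<in> carrier (free_mod R S)" for u
  proof (rule free_mod_lin_hom_eqI[OF rR Z lin_hom_comp[OF lin_hom_comp[OF E free_augm_lin_hom[OF Y]] d] rho _ u])
    fix j assume j: "j \<in> S"
    have "E (unit_vec R j) = unit_vec R (w j)"
      unfolding E_def using w[OF j] unit_vec_carrier[OF rR]
      by (intro lin_ext_unit_vec[OF rR lmod_free_mod[OF rR] j]) auto
    then show "d (free_augm R Y (E (unit_vec R j))) = \<rho> (unit_vec R j)"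
      using free_augm_unit_vec[OF Y] w[OF j] by simp
  qed
  then show ?thesis using E by blast
qed

lemma cycle_map_lifts_to_free:
  assumes N: "flat_complex R N dN" and Mm: "lmod R Mm" and fp: "fin_presented R Mm"
    and g: "\<gamma> \<in> lin_hom R Mm (N m)" and gz: "\<And>x. x \<in> carrier Mm \<Longrightarrow> dN m (\<gamma> x) = \<zero>\<^bsub>N (m - 1)\<^esub>"
  shows "\<exists>H\<in>lin_hom R Mm (free_mod R (carrier (N (m + 1)))).
    \<forall>x\<in>carrier Mm. dN (m + 1) (free_augm R (N (m + 1)) (H x)) = \<gamma> x"
proof -
  have NC: "is_complex R N dN" by (rule flat_complex_is_complex[OF N])
  have rR: "ring R" by (rule cx_ring[OF NC])
  have flat: "flat_module R (cycles N dN m)" using N by (simp add: flat_complex_def)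
  have exact: "carrier (cycles N dN m) = dN (m + 1) ` carrier (N (m + 1))"
    using N by (simp add: flat_complex_def exact_complex_def)
  obtain k :: nat and \<beta> \<rho> where beta: "\<beta> \<in> lin_hom R Mm (free_mod R {..<k})"
    and rho: "\<rho> \<in> lin_hom R (free_mod R {..<k}) (cycles N dN m)"
    and fac: "\<forall>x\<in>carrier Mm. \<gamma> x = \<rho> (\<beta> x)"
    using fin_presented_to_flat_factors_through_free[OF rR Mm fp flat lin_hom_to_cycles[where N=N and d=dN and n=m, OF g gz]]
    by blast
  have "\<rho> (unit_vec R j) \<in> dN (m + 1) ` carrier (N (m + 1))" if "j \<in> {..<k}" for j
    using lin_homD(1)[OF rho unit_vec_carrier[OF rR that]] exact by simp
  then obtain E where E: "E \<in> lin_hom R (free_mod R {..<k}) (free_mod R (carrier (N (m + 1))))"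
    and dE: "\<forall>u\<in>carrier (free_mod R {..<k}). dN (m + 1) (free_augm R (N (m + 1)) (E u)) = \<rho> u"
    using lin_hom_lift_to_free[OF rR cx_lmod[OF NC] cx_lmod[OF NC] cx_d[OF NC, of "m + 1", simplified]
        lin_hom_cycles[OF rho]] by blast
  show ?thesis
    using lin_hom_comp[OF beta E] dE fac lin_homD(1)[OF beta] by (intro bexI[of _ "\<lambda>x. E (\<beta> x)"]) auto
qed

lemma disc_cx_pair_lin_hom:
  fixes R (structure)
  assumes rR: "ring R"
    and u: "u \<in> lin_hom R X (free_mod R (carrier (N n)))"
    and v: "v \<in> lin_hom R X (free_mod R (carrier (N (n + 1))))"
  shows "(\<lambda>x p. if fst p then u x (snd p) else v x (snd p)) \<in> lin_hom R X (disc_cx R N n)"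
proof -
  interpret ring R by fact
  show ?thesis
  proof (rule lin_homI)
    fix x assume x: "x \<in> carrier X"
    note ux = lin_homD(1)[OF u x] and vx = lin_homD(1)[OF v x]
    have "{p. (if fst p then u x (snd p) else v x (snd p)) \<noteq> \<zero>}
        \<subseteq> Pair True ` {y. u x y \<noteq> \<zero>} \<union> Pair False ` {y. v x y \<noteq> \<zero>}"
      by (auto simp: image_iff split: if_splits intro: prod_eqI)
    then have "finite {p. (if fst p then u x (snd p) else v x (snd p)) \<noteq> \<zero>}"
      using free_mod_carrierD(3)[OF ux] free_mod_carrierD(3)[OF vx] by (meson finite_UnI finite_imageI finite_subset)
    moreover have "(if fst p then u x (snd p) else v x (snd p)) = \<zero>" if "p \<notin> disc_basis N n" for p
      using that free_mod_carrierD(2)[OF ux] free_mod_carrierD(2)[OF vx] by (cases p) (auto simp: disc_basis_def)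
    ultimately show "(\<lambda>p. if fst p then u x (snd p) else v x (snd p)) \<in> carrier (disc_cx R N n)"
      unfolding disc_cx_def using free_mod_carrierD(1)[OF ux] free_mod_carrierD(1)[OF vx]
      by (intro free_mod_carrierI) auto
  qed (auto simp: disc_cx_def free_mod_simps lin_homD[OF u] lin_homD[OF v])
qed

lemma disc_cx_component_lin_hom:
  assumes rR: "ring R"
  shows "(\<lambda>w y. w (t, y)) \<in> lin_hom R (disc_cx R N n) (free_mod R (carrier (N (if t then n else n + 1))))"
proof -
  interpret ring R by fact
  show ?thesis
  proof (rule lin_homI)
    fix w assume "w \<in> carrier (disc_cx R N n)"
    then have w: "w \<in> carrier (free_mod R (disc_basis N n))" by (simp add: disc_cx_def)
    have "{y. w (t, y) \<noteq> \<zero>\<^bsub>R\<^esub>} \<subseteq> snd ` {p. w p \<noteq> \<zero>\<^bsub>R\<^esub>}" by force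
    then have "finite {y. w (t, y) \<noteq> \<zero>\<^bsub>R\<^esub>}"
      using free_mod_carrierD(3)[OF w] by (meson finite_imageI finite_subset)
    moreover have "w (t, y) = \<zero>\<^bsub>R\<^esub>" if "y \<notin> carrier (N (if t then n else n + 1))" for y
      using that free_mod_carrierD(2)[OF w, of "(t, y)"] by (cases t) (auto simp: disc_basis_def)
    ultimately show "(\<lambda>y. w (t, y)) \<in> carrier (free_mod R (carrier (N (if t then n else n + 1))))"
      using free_mod_carrierD(1)[OF w] by (intro free_mod_carrierI) auto
  qed (simp_all add: disc_cx_def free_mod_simps)
qed

definition disc_counit :: "'r ring \<Rightarrow> (int \<Rightarrow> ('r, 'n) module) \<Rightarrow> (int \<Rightarrow> 'n \<Rightarrow> 'n) \<Rightarrow> int \<Rightarrow> (bool \<times> 'n \<Rightarrow> 'r) \<Rightarrow> 'n" where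
  "disc_counit R N dN = disc_ext R N dN (\<lambda>_ y. y)"

lemma disc_counit_cx_morphism:
  assumes N: "is_complex R N dN"
  shows "cx_morphism R (disc_cx R N) (disc_d R) N dN (disc_counit R N dN)"
  using disc_ext_cx_morphism[where L="\<lambda>_ y. y", OF N] by (simp add: disc_counit_def)

lemma disc_counit_eq:
  assumes N: "is_complex R N dN" and w: "w \<in> carrier (disc_cx R N n)"
  shows "disc_counit R N dN n w
    = free_augm R (N n) (\<lambda>y. w (True, y)) \<oplus>\<^bsub>N n\<^esub> dN (n + 1) (free_augm R (N (n + 1)) (\<lambda>y. w (False, y)))"
proof -
  have id_closed: "\<And>n y. y \<in> carrier (N n) \<Longrightarrow> y \<in> carrier (N n)" by simp
  show ?thesis unfolding disc_counit_def
  proof (rule disc_cx_lin_hom_eqI[OF cx_ring[OF N] cx_lmod[OF N] disc_ext_lin_hom[where N=N and L="\<lambda>_ y. y", OF N id_closed] _ _ _ w])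
    have rR: "ring R" by (rule cx_ring[OF N])
    interpret Nn: lmod R "N n" by (rule cx_lmod[OF N])
    show "(\<lambda>w. free_augm R (N n) (\<lambda>y. w (True, y)) \<oplus>\<^bsub>N n\<^esub> dN (n + 1) (free_augm R (N (n + 1)) (\<lambda>y. w (False, y))))
        \<in> lin_hom R (disc_cx R N n) (N n)"
      using lin_hom_comp[OF disc_cx_component_lin_hom[where t=True and N=N and n=n, OF rR, simplified] free_augm_lin_hom[OF cx_lmod[OF N]]]
        lin_hom_comp[OF lin_hom_comp[OF disc_cx_component_lin_hom[where t=False and N=N and n=n, OF rR, simplified] free_augm_lin_hom[OF cx_lmod[OF N]]]
          cx_d[OF N, of "n + 1", simplified]]
      by (intro lin_hom_pointwise_add[OF cx_lmod[OF N]]) simp_all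
    have True_part: "(\<lambda>y'. unit_vec R (True, y) (True, y')) = unit_vec R y"
      and False_part: "(\<lambda>y'. unit_vec R (True, y) (False, y')) = (\<lambda>_. \<zero>\<^bsub>R\<^esub>)"
      and True_part': "(\<lambda>y'. unit_vec R (False, y) (True, y')) = (\<lambda>_. \<zero>\<^bsub>R\<^esub>)"
      and False_part': "(\<lambda>y'. unit_vec R (False, y) (False, y')) = unit_vec R y" for y
      by (auto simp: unit_vec_def)
    fix y
    show "y \<in> carrier (N n) \<Longrightarrow> disc_ext R N dN (\<lambda>_ y. y) n (unit_vec R (True, y))
        = free_augm R (N n) (\<lambda>y'. unit_vec R (True, y) (True, y'))
          \<oplus>\<^bsub>N n\<^esub> dN (n + 1) (free_augm R (N (n + 1)) (\<lambda>y'. unit_vec R (True, y) (False, y')))"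
      using disc_ext_True[where N=N and L="\<lambda>_ y. y", OF N id_closed] free_augm_unit_vec[OF cx_lmod[OF N]] free_augm_zero[OF cx_lmod[OF N]]
        cx_d_zero[OF N]
      by (simp add: True_part False_part)
    show "y \<in> carrier (N (n + 1)) \<Longrightarrow> disc_ext R N dN (\<lambda>_ y. y) n (unit_vec R (False, y))
        = free_augm R (N n) (\<lambda>y'. unit_vec R (False, y) (True, y'))
          \<oplus>\<^bsub>N n\<^esub> dN (n + 1) (free_augm R (N (n + 1)) (\<lambda>y'. unit_vec R (False, y) (False, y')))"
      using disc_ext_False[where N=N and L="\<lambda>_ y. y", OF N id_closed] free_augm_unit_vec[OF cx_lmod[OF N]] free_augm_zero[OF cx_lmod[OF N]]
        cx_d_closed[OF N]
      by (simp add: True_part' False_part')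
  qed
qed

text \<open>Degree m of the identity f = d (augm H) + (augm H) d, where H m maps M m to the free
  module on N (m + 1) and Hp stands for H (m - 1).\<close>

definition homotopy_step :: "'r ring \<Rightarrow> (int \<Rightarrow> ('r, 'm) module) \<Rightarrow> (int \<Rightarrow> 'm \<Rightarrow> 'm) \<Rightarrow> (int \<Rightarrow> ('r, 'n) module)
    \<Rightarrow> (int \<Rightarrow> 'n \<Rightarrow> 'n) \<Rightarrow> (int \<Rightarrow> 'm \<Rightarrow> 'n) \<Rightarrow> int \<Rightarrow> ('m \<Rightarrow> 'n \<Rightarrow> 'r) \<Rightarrow> ('m \<Rightarrow> 'n \<Rightarrow> 'r) \<Rightarrow> bool" where
  "homotopy_step R M dM N dN f m Hp H \<longleftrightarrow> H \<in> lin_hom R (M m) (free_mod R (carrier (N (m + 1))))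
     \<and> (\<forall>x\<in>carrier (M m). f m x
          = dN (m + 1) (free_augm R (N (m + 1)) (H x)) \<oplus>\<^bsub>N m\<^esub> free_augm R (N m) (Hp (dM m x)))"

definition disc_map :: "'r ring \<Rightarrow> (int \<Rightarrow> 'm \<Rightarrow> 'm) \<Rightarrow> (int \<Rightarrow> 'm \<Rightarrow> 'n \<Rightarrow> 'r) \<Rightarrow> int \<Rightarrow> 'm \<Rightarrow> (bool \<times> 'n \<Rightarrow> 'r)" where
  "disc_map R dM H n x = (\<lambda>p. if fst p then H (n - 1) (dM n x) (snd p) else H n x (snd p))"

lemma disc_map_cx_morphism:
  assumes M: "is_complex R M dM"
    and H: "\<And>n. H n \<in> lin_hom R (M n) (free_mod R (carrier (N (n + 1))))"
  shows "cx_morphism R M dM (disc_cx R N) (disc_d R) (disc_map R dM H)"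
  unfolding cx_morphism_def
proof (intro allI conjI ballI)
  have rR: "ring R" by (rule cx_ring[OF M])
  fix n
  show "disc_map R dM H n \<in> lin_hom R (M n) (disc_cx R N n)"
    unfolding disc_map_def using lin_hom_comp[OF cx_d[OF M] H[of "n - 1"]] H[of n]
    by (intro disc_cx_pair_lin_hom[OF rR]) simp_all
  fix x assume x: "x \<in> carrier (M n)"
  have "H (n - 2) \<zero>\<^bsub>M (n - 2)\<^esub> = \<zero>\<^bsub>free_mod R (carrier (N (n - 1)))\<^esub>"
    using lin_hom_zero[OF cx_lmod[OF M] lmod_free_mod[OF rR] H[of "n - 2"]] by simp
  then show "disc_d R n (disc_map R dM H n x) = disc_map R dM H (n - 1) (dM n x)"
    using cx_dd'[OF M x] by (auto simp: disc_d_def disc_map_def free_mod_simps)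
qed

lemma free_homotopy_factors_through_disc:
  assumes M: "is_complex R M dM" and N: "is_complex R N dN"
    and H: "\<And>n. homotopy_step R M dM N dN f n (H (n - 1)) (H n)"
  shows "cx_morphism R M dM (disc_cx R N) (disc_d R) (disc_map R dM H)"
    and "x \<in> carrier (M n) \<Longrightarrow> disc_counit R N dN n (disc_map R dM H n x) = f n x"
proof -
  have Hlin: "\<And>n. H n \<in> lin_hom R (M n) (free_mod R (carrier (N (n + 1))))"
    using H by (simp add: homotopy_step_def)
  show g: "cx_morphism R M dM (disc_cx R N) (disc_d R) (disc_map R dM H)"
    by (rule disc_map_cx_morphism[OF M Hlin])
  assume x: "x \<in> carrier (M n)"
  interpret Nn: lmod R "N n" by (rule cx_lmod[OF N])
  have "H (n - 1) (dM n x) \<in> carrier (free_mod R (carrier (N n)))"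
    using lin_homD(1)[OF Hlin[of "n - 1"] lin_homD(1)[OF cx_d[OF M] x]] by simp
  moreover have "H n x \<in> carrier (free_mod R (carrier (N (n + 1))))" by (rule lin_homD(1)[OF Hlin x])
  ultimately show "disc_counit R N dN n (disc_map R dM H n x) = f n x"
    using H[of n] x disc_counit_eq[OF N lin_homD(1)[OF cxm_lin[OF g] x]]
      lin_homD(1)[OF free_augm_lin_hom[OF cx_lmod[OF N]]] cx_d_closed[OF N]
    by (auto simp: homotopy_step_def disc_map_def Nn.a_comm)
qed

lemma homotopy_step_trivial:
  assumes M: "is_complex R M dM" and N: "is_complex R N dN" and f: "cx_morphism R M dM N dN f"
    and Mn: "carrier (M n) = {\<zero>\<^bsub>M n\<^esub>}"
  shows "homotopy_step R M dM N dN f n (\<lambda>x y. \<zero>\<^bsub>R\<^esub>) (\<lambda>x y. \<zero>\<^bsub>R\<^esub>)"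
proof -
  interpret Nn: lmod R "N n" by (rule cx_lmod[OF N])
  have "f n \<zero>\<^bsub>M n\<^esub> = \<zero>\<^bsub>N n\<^esub>" by (rule lin_hom_zero[OF cx_lmod[OF M] cx_lmod[OF N] cxm_lin[OF f]])
  then show ?thesis
    unfolding homotopy_step_def using Mn free_augm_zero[OF cx_lmod[OF N]] cx_d_zero[OF N]
    by (simp add: zero_free_mod_lin_hom[OF cx_ring[OF N]])
qed

lemma homotopy_step_boundary:
  assumes M: "is_complex R M dM" and N: "is_complex R N dN"
    and step: "homotopy_step R M dM N dN f m Hp H"
    and Hp: "Hp \<in> lin_hom R (M (m - 1)) (free_mod R (carrier (N m)))"
    and x: "x \<in> carrier (M (m + 1))"
  shows "f m (dM (m + 1) x) = dN (m + 1) (free_augm R (N (m + 1)) (H (dM (m + 1) x)))"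
proof -
  interpret Nm: lmod R "N m" by (rule cx_lmod[OF N])
  have y: "dM (m + 1) x \<in> carrier (M m)" by (rule cx_d_closed[OF M x])
  have "Hp (dM m (dM (m + 1) x)) = (\<lambda>_. \<zero>\<^bsub>R\<^esub>)"
    using cx_dd[OF M x] lin_hom_zero[OF cx_lmod[OF M] lmod_free_mod[OF cx_ring[OF M]] Hp]
    by (simp add: free_mod_simps)
  moreover have "H (dM (m + 1) x) \<in> carrier (free_mod R (carrier (N (m + 1))))"
    using lin_homD(1)[OF conjunct1[OF step[unfolded homotopy_step_def]] y] .
  ultimately show ?thesis
    using step y free_augm_zero[OF cx_lmod[OF N]] lin_homD(1)[OF free_augm_lin_hom[OF cx_lmod[OF N]]]
      cx_d_closed[OF N]
    by (simp add: homotopy_step_def)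
qed

text \<open>The defect f - (augm Hp) d maps M (m + 1) into the cycles of N, which are flat, so it
  lifts along d through a free module.\<close>

lemma homotopy_extend:
  assumes M: "is_complex R M dM" and N: "flat_complex R N dN"
    and fp: "fin_presented R (M (m + 1))" and f: "cx_morphism R M dM N dN f"
    and G: "G \<in> lin_hom R (M m) (free_mod R (carrier (N (m + 1))))"
    and bd: "\<And>x. x \<in> carrier (M (m + 1)) \<Longrightarrow>
      f m (dM (m + 1) x) = dN (m + 1) (free_augm R (N (m + 1)) (G (dM (m + 1) x)))"
  shows "\<exists>H. homotopy_step R M dM N dN f (m + 1) G H"
proof -
  have NC: "is_complex R N dN" by (rule flat_complex_is_complex[OF N])
  interpret N1: lmod R "N (m + 1)" by (rule cx_lmod[OF NC])
  interpret N0: lmod R "N m" by (rule cx_lmod[OF NC])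
  let ?\<beta>G = "\<lambda>x. free_augm R (N (m + 1)) (G (dM (m + 1) x))"
  have \<beta>G: "?\<beta>G \<in> lin_hom R (M (m + 1)) (N (m + 1))"
    using lin_hom_comp[OF lin_hom_comp[OF cx_d[OF M, of "m + 1", simplified] G] free_augm_lin_hom[OF cx_lmod[OF NC]]]
    by simp
  define \<gamma> where "\<gamma> x = f (m + 1) x \<ominus>\<^bsub>N (m + 1)\<^esub> ?\<beta>G x" for x
  have \<gamma>: "\<gamma> \<in> lin_hom R (M (m + 1)) (N (m + 1))"
    unfolding \<gamma>_def by (rule lin_hom_pointwise_diff[OF cx_lmod[OF NC] cxm_lin[OF f] \<beta>G])
  have "dN (m + 1) (\<gamma> x) = \<zero>\<^bsub>N (m + 1 - 1)\<^esub>" if x: "x \<in> carrier (M (m + 1))" for x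
  proof -
    have "dN (m + 1) (\<gamma> x) = f m (dM (m + 1) x) \<ominus>\<^bsub>N m\<^esub> dN (m + 1) (?\<beta>G x)"
      unfolding \<gamma>_def using lin_homD(1)[OF cxm_lin[OF f] x] lin_homD(1)[OF \<beta>G x]
        lin_hom_diff[OF cx_lmod[OF NC] cx_lmod[OF NC] cx_d[OF NC, of "m + 1"]] cxm_comm[OF f x]
      by simp
    then show ?thesis using bd[OF x] cx_d_closed[OF NC lin_homD(1)[OF \<beta>G x]] by (simp add: N0.r_neg N0.minus_eq)
  qed
  then obtain H where H: "H \<in> lin_hom R (M (m + 1)) (free_mod R (carrier (N (m + 1 + 1))))"
    and dH: "\<forall>x\<in>carrier (M (m + 1)). dN (m + 1 + 1) (free_augm R (N (m + 1 + 1)) (H x)) = \<gamma> x"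
    using cycle_map_lifts_to_free[OF N cx_lmod[OF M] fp \<gamma>] by blast
  have "f (m + 1) x = \<gamma> x \<oplus>\<^bsub>N (m + 1)\<^esub> ?\<beta>G x" if x: "x \<in> carrier (M (m + 1))" for x
    using lin_homD(1)[OF cxm_lin[OF f] x] lin_homD(1)[OF \<beta>G x]
    by (simp add: \<gamma>_def N1.minus_eq N1.a_assoc N1.l_neg)
  then have "homotopy_step R M dM N dN f (m + 1) G H"
    using H dH by (simp add: homotopy_step_def)
  then show ?thesis by blast
qed

text \<open>Entry k is H (b + k) for a lower bound b of M; entry 0 is zero because M b is trivial.\<close>

primrec homotopy_seq :: "'r ring \<Rightarrow> (int \<Rightarrow> ('r, 'm) module) \<Rightarrow> (int \<Rightarrow> 'm \<Rightarrow> 'm) \<Rightarrow> (int \<Rightarrow> ('r, 'n) module)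
    \<Rightarrow> (int \<Rightarrow> 'n \<Rightarrow> 'n) \<Rightarrow> (int \<Rightarrow> 'm \<Rightarrow> 'n) \<Rightarrow> int \<Rightarrow> nat \<Rightarrow> ('m \<Rightarrow> 'n \<Rightarrow> 'r)" where
  "homotopy_seq R M dM N dN f b 0 = (\<lambda>x y. \<zero>\<^bsub>R\<^esub>)"
| "homotopy_seq R M dM N dN f b (Suc k) =
    (SOME H. homotopy_step R M dM N dN f (b + int (Suc k)) (homotopy_seq R M dM N dN f b k) H)"

lemma homotopy_seq_step:
  assumes M: "is_complex R M dM" and N: "flat_complex R N dN"
    and fp: "\<forall>n. fin_presented R (M n)" and f: "cx_morphism R M dM N dN f"
    and bnd: "\<forall>n\<le>b. carrier (M n) = {\<zero>\<^bsub>M n\<^esub>}"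
  shows "homotopy_seq R M dM N dN f b (k - 1) \<in> lin_hom R (M (b + int k - 1)) (free_mod R (carrier (N (b + int k))))
    \<and> homotopy_step R M dM N dN f (b + int k) (homotopy_seq R M dM N dN f b (k - 1)) (homotopy_seq R M dM N dN f b k)"
proof (induction k)
  case 0
  have NC: "is_complex R N dN" by (rule flat_complex_is_complex[OF N])
  show ?case
    using homotopy_step_trivial[OF M NC f] bnd zero_free_mod_lin_hom[OF cx_ring[OF M]] by simp
next
  case (Suc k)
  let ?h = "homotopy_seq R M dM N dN f b"
  have NC: "is_complex R N dN" by (rule flat_complex_is_complex[OF N])
  have step: "homotopy_step R M dM N dN f (b + int k) (?h (k - 1)) (?h k)"
    and prev: "?h (k - 1) \<in> lin_hom R (M (b + int k - 1)) (free_mod R (carrier (N (b + int k))))"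
    using Suc.IH by auto
  have lin: "?h k \<in> lin_hom R (M (b + int k)) (free_mod R (carrier (N (b + int k + 1))))"
    using step by (simp add: homotopy_step_def)
  have "\<exists>H. homotopy_step R M dM N dN f (b + int k + 1) (?h k) H"
    using homotopy_step_boundary[OF M NC step prev] fp
    by (intro homotopy_extend[OF M N _ f lin]) auto
  then have "\<exists>H. homotopy_step R M dM N dN f (b + int (Suc k)) (?h k) H"
    by (simp add: ac_simps)
  then have "homotopy_step R M dM N dN f (b + int (Suc k)) (?h k) (?h (Suc k))"
    unfolding homotopy_seq.simps by (rule someI_ex)
  then show ?case using lin by (simp add: ac_simps)
qed

lemma free_homotopy_exists:
  assumes M: "is_complex R M dM" and bb: "bounded_below M" and fp: "\<forall>n. fin_presented R (M n)"
    and N: "flat_complex R N dN" and f: "cx_morphism R M dM N dN f"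
  shows "\<exists>H. \<forall>n. homotopy_step R M dM N dN f n (H (n - 1)) (H n)"
proof -
  obtain b where bnd: "\<forall>n\<le>b. carrier (M n) = {\<zero>\<^bsub>M n\<^esub>}" using bb by (auto simp: bounded_below_def)
  define H where "H n = homotopy_seq R M dM N dN f b (nat (n - b))" for n
  have "homotopy_step R M dM N dN f n (H (n - 1)) (H n)" for n
  proof (cases "b \<le> n")
    case True
    then have "b + int (nat (n - b)) = n" "nat (n - 1 - b) = nat (n - b) - 1" by simp_all
    then show ?thesis using homotopy_seq_step[OF M N fp f bnd, of "nat (n - b)"] by (simp add: H_def)
  next
    case False
    then show ?thesis
      using homotopy_step_trivial[OF M flat_complex_is_complex[OF N] f] bnd by (simp add: H_def)
  qed
  then show ?thesis by (intro exI[of _ H]) blast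
qed

theorem corollary2p7:
  fixes R :: "'r ring"
    and M :: "int \<Rightarrow> ('r, 'm) module" and dM :: "int \<Rightarrow> 'm \<Rightarrow> 'm"
    and N :: "int \<Rightarrow> ('r, 'n) module" and dN :: "int \<Rightarrow> 'n \<Rightarrow> 'n"
  assumes "ring R"
    and "is_complex R M dM"
    and "bounded_below M"
    and "\<forall>n. fin_presented R (M n)"
    and "flat_complex R N dN"
  shows "in_Pr_inv R M dM N dN"
proof -
  have N: "is_complex R N dN" by (rule flat_complex_is_complex[OF assms(5)])
  show ?thesis
    unfolding in_Pr_inv_def
  proof (intro conjI allI impI N)
    fix f assume f: "cx_morphism R M dM N dN f"
    obtain H where H: "\<And>n. homotopy_step R M dM N dN f n (H (n - 1)) (H n)"
      using free_homotopy_exists[OF assms(2-5) f] by blast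
    show "\<exists>(P :: int \<Rightarrow> ('r, bool \<times> 'n \<Rightarrow> 'r) module) dP g h.
        projective_complex R P dP \<and> cx_morphism R M dM P dP g \<and> cx_morphism R P dP N dN h
        \<and> (\<forall>n. \<forall>x\<in>carrier (M n). h n (g n x) = f n x)"
    proof (intro exI conjI)
      show "projective_complex R (disc_cx R N) (disc_d R)" by (rule disc_cx_projective[OF assms(1)])
      show "cx_morphism R M dM (disc_cx R N) (disc_d R) (disc_map R dM H)"
        by (rule free_homotopy_factors_through_disc(1)[OF assms(2) N H])
      show "cx_morphism R (disc_cx R N) (disc_d R) N dN (disc_counit R N dN)"
        by (rule disc_counit_cx_morphism[OF N])
      show "\<forall>n. \<forall>x\<in>carrier (M n). disc_counit R N dN n (disc_map R dM H n x) = f n x"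
        using free_homotopy_factors_through_disc(2)[OF assms(2) N H] by blast
    qed
  qed
qed

end
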